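(* Let $\mathcal G$ be a network as in the context, let $Y$ be a subspace of $\mathbb C^{4E}$ and $R$ a (not necessarily self-adjoint) linear operator on $Y$. Consider the sesquilinear form $$\mathfrak a(u,v)=\sum_{\mathsf e\in\mathsf E}\int_0^{\ell_{\mathsf e}}u_{\mathsf e}''(x)\overline{v_{\mathsf e}''(x)}\,dx-\left(R{\bf u}^{0,1},{\bf v}^{0,1}\right)_{\mathbb C^{4E}}$$ with domain $D(\mathfrak a)=\widetilde H^2_Y(\mathcal G):=\{u\in\widetilde H^2(\mathcal G):{\bf u}^{0,1}\in Y\}$. Then the operator on $L^2(\mathcal G)$ associated with $\mathfrak a$ is $A_{Y,R}$, i.e. the edgewise fourth derivative $u\mapsto(u_{\mathsf e}'''')_{\mathsf e}$ with domain $D(A_{Y,R})=\{u\in\widetilde H^4(\mathcal G):{\bf u}^{0,1}\in Y,\ {\bf u}^{3,2}+R{\bf u}^{0,1}\in Y^\perp\}$.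
   Context: Let $\mathsf G=(\mathsf V,\mathsf E)$ be a finite connected graph without loops or multiple edges, $E=|\mathsf E|$. Fix an orientation; each edge $\mathsf e$ is identified with $[0,\ell_{\mathsf e}]$, $\ell_{\mathsf e}>0$, initial endpoint $\leftrightarrow0$, terminal endpoint $\leftrightarrow\ell_{\mathsf e}$, giving the network $\mathcal G$. $L^2(\mathcal G)=\bigoplus_{\mathsf e}L^2(0,\ell_{\mathsf e})$, $\widetilde H^k(\mathcal G)=\bigoplus_{\mathsf e}H^k(0,\ell_{\mathsf e})$. With $u(0)=(u_{\mathsf e}(0))_{\mathsf e}$, $u(\ell)=(u_{\mathsf e}(\ell_{\mathsf e}))_{\mathsf e}$ (similarly for derivatives), ${\bf u}^{0,1}=(u(0),u(\ell),-u'(0),u'(\ell))\in\mathbb C^{4E}$ and ${\bf u}^{3,2}=(-u'''(0),u'''(\ell),-u''(0),-u''(\ell))\in\mathbb C^{4E}$. The operator $S$ associated with a form $\mathfrak a$ is defined by $D(S)=\{u\in D(\mathfrak a):\exists v\in L^2(\mathcal G)\text{ with }\mathfrak a(u,h)=(v,h)_{L^2}\ \forall h\in D(\mathfrak a)\}$, $Su=v$. *)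

theory Defs
  imports "HOL-Analysis.Analysis"
begin

text \<open>Edges are indexed by 0..<E; edge e runs from vertex src e (identified with 0)
  to vertex tgt e (identified with len e). The graph is finite, connected, loop-free,
  without multiple edges.\<close>

definition network :: "'v set \<Rightarrow> (nat \<Rightarrow> 'v) \<Rightarrow> (nat \<Rightarrow> 'v) \<Rightarrow> nat \<Rightarrow> (nat \<Rightarrow> real) \<Rightarrow> bool" where
  "network V src tgt E len \<longleftrightarrow>
     finite V \<and> V \<noteq> {} \<and>
     (\<forall>e<E. src e \<in> V \<and> tgt e \<in> V \<and> src e \<noteq> tgt e \<and> len e > 0) \<and>
     (\<forall>e<E. \<forall>e'<E. e \<noteq> e' \<longrightarrow> {src e, tgt e} \<noteq> {src e', tgt e'}) \<and>
     (\<forall>v\<in>V. \<forall>w\<in>V. (v, w) \<in> ({(src e, tgt e) | e. e < E} \<union> {(tgt e, src e) | e. e < E})\<^sup>*)"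

definition L2_on :: "real set \<Rightarrow> (real \<Rightarrow> complex) \<Rightarrow> bool" where
  "L2_on S g \<longleftrightarrow> set_borel_measurable lebesgue S g \<and>
                  set_integrable lebesgue S (\<lambda>x. (cmod (g x))\<^sup>2)"

definition nderiv :: "real \<Rightarrow> nat \<Rightarrow> (real \<Rightarrow> complex) \<Rightarrow> real \<Rightarrow> complex" where
  "nderiv l j f = ((\<lambda>g x. vector_derivative g (at x within {0..l})) ^^ j) f"

text \<open>Sobolev space H^k(0,l), k \<ge> 1, via its standard one-dimensional description:
  for every j < k, the j-th derivative is (on [0,l]) an indefinite integral of a
  square-integrable function; i.e. f, ..., f^(k-1) are absolutely continuous and
  f^(k) (which exists a.e.) lies in L^2.  Elements are taken as their continuous
  representatives, so boundary values are well defined.\<close>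
definition Hk :: "nat \<Rightarrow> real \<Rightarrow> (real \<Rightarrow> complex) \<Rightarrow> bool" where
  "Hk k l f \<longleftrightarrow> (\<forall>j<k. \<exists>g. L2_on {0..l} g \<and>
       (\<forall>x\<in>{0..l}. nderiv l j f x = nderiv l j f 0 + (LINT t:{0..x}|lebesgue. g t)))"

definition L2G :: "nat \<Rightarrow> (nat \<Rightarrow> real) \<Rightarrow> (nat \<Rightarrow> real \<Rightarrow> complex) \<Rightarrow> bool" where
  "L2G E len u \<longleftrightarrow> (\<forall>e<E. L2_on {0..len e} (u e))"

definition L2inner :: "nat \<Rightarrow> (nat \<Rightarrow> real) \<Rightarrow> (nat \<Rightarrow> real \<Rightarrow> complex) \<Rightarrow> (nat \<Rightarrow> real \<Rightarrow> complex) \<Rightarrow> complex" where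
  "L2inner E len u v = (\<Sum>e<E. LINT x:{0..len e}|lebesgue. u e x * cnj (v e x))"

definition HkG :: "nat \<Rightarrow> nat \<Rightarrow> (nat \<Rightarrow> real) \<Rightarrow> (nat \<Rightarrow> real \<Rightarrow> complex) \<Rightarrow> bool" where
  "HkG k E len u \<longleftrightarrow> (\<forall>e<E. Hk k (len e) (u e))"

text \<open>Vectors of C^n are functions nat \<Rightarrow> complex vanishing at indices \<ge> n.\<close>
definition cvecs :: "nat \<Rightarrow> (nat \<Rightarrow> complex) set" where
  "cvecs n = {y. \<forall>i\<ge>n. y i = 0}"

definition cinner :: "nat \<Rightarrow> (nat \<Rightarrow> complex) \<Rightarrow> (nat \<Rightarrow> complex) \<Rightarrow> complex" where
  "cinner n a b = (\<Sum>i<n. a i * cnj (b i))"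

definition csubspace :: "nat \<Rightarrow> (nat \<Rightarrow> complex) set \<Rightarrow> bool" where
  "csubspace n Y \<longleftrightarrow> Y \<subseteq> cvecs n \<and> (\<lambda>i. 0) \<in> Y \<and>
     (\<forall>x\<in>Y. \<forall>y\<in>Y. (\<lambda>i. x i + y i) \<in> Y) \<and> (\<forall>c. \<forall>y\<in>Y. (\<lambda>i. c * y i) \<in> Y)"

definition clinear_on :: "(nat \<Rightarrow> complex) set \<Rightarrow> ((nat \<Rightarrow> complex) \<Rightarrow> (nat \<Rightarrow> complex)) \<Rightarrow> bool" where
  "clinear_on Y R \<longleftrightarrow> (\<forall>y\<in>Y. R y \<in> Y) \<and>
     (\<forall>x\<in>Y. \<forall>y\<in>Y. R (\<lambda>i. x i + y i) = (\<lambda>i. R x i + R y i)) \<and>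
     (\<forall>c. \<forall>y\<in>Y. R (\<lambda>i. c * y i) = (\<lambda>i. c * R y i))"

definition cperp :: "nat \<Rightarrow> (nat \<Rightarrow> complex) set \<Rightarrow> (nat \<Rightarrow> complex) set" where
  "cperp n Y = {w \<in> cvecs n. \<forall>y\<in>Y. cinner n w y = 0}"

definition bv01 :: "nat \<Rightarrow> (nat \<Rightarrow> real) \<Rightarrow> (nat \<Rightarrow> real \<Rightarrow> complex) \<Rightarrow> nat \<Rightarrow> complex" where
  "bv01 E len u i =
     (if i < E then u i 0
      else if i < 2*E then u (i-E) (len (i-E))
      else if i < 3*E then - nderiv (len (i-2*E)) 1 (u (i-2*E)) 0
      else if i < 4*E then nderiv (len (i-3*E)) 1 (u (i-3*E)) (len (i-3*E))
      else 0)"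

definition bv32 :: "nat \<Rightarrow> (nat \<Rightarrow> real) \<Rightarrow> (nat \<Rightarrow> real \<Rightarrow> complex) \<Rightarrow> nat \<Rightarrow> complex" where
  "bv32 E len u i =
     (if i < E then - nderiv (len i) 3 (u i) 0
      else if i < 2*E then nderiv (len (i-E)) 3 (u (i-E)) (len (i-E))
      else if i < 3*E then - nderiv (len (i-2*E)) 2 (u (i-2*E)) 0
      else if i < 4*E then - nderiv (len (i-3*E)) 2 (u (i-3*E)) (len (i-3*E))
      else 0)"

definition form_dom :: "nat \<Rightarrow> (nat \<Rightarrow> real) \<Rightarrow> (nat \<Rightarrow> complex) set \<Rightarrow> (nat \<Rightarrow> real \<Rightarrow> complex) set" where
  "form_dom E len Y = {u. HkG 2 E len u \<and> bv01 E len u \<in> Y}"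

definition form_a :: "nat \<Rightarrow> (nat \<Rightarrow> real) \<Rightarrow> ((nat \<Rightarrow> complex) \<Rightarrow> (nat \<Rightarrow> complex))
     \<Rightarrow> (nat \<Rightarrow> real \<Rightarrow> complex) \<Rightarrow> (nat \<Rightarrow> real \<Rightarrow> complex) \<Rightarrow> complex" where
  "form_a E len R u v =
     (\<Sum>e<E. LINT x:{0..len e}|lebesgue.
          nderiv (len e) 2 (u e) x * cnj (nderiv (len e) 2 (v e) x))
     - cinner (4*E) (R (bv01 E len u)) (bv01 E len v)"

definition assoc_op :: "nat \<Rightarrow> (nat \<Rightarrow> real) \<Rightarrow> (nat \<Rightarrow> real \<Rightarrow> complex) set
     \<Rightarrow> ((nat \<Rightarrow> real \<Rightarrow> complex) \<Rightarrow> (nat \<Rightarrow> real \<Rightarrow> complex) \<Rightarrow> complex)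
     \<Rightarrow> (nat \<Rightarrow> real \<Rightarrow> complex) \<Rightarrow> (nat \<Rightarrow> real \<Rightarrow> complex) \<Rightarrow> bool" where
  "assoc_op E len D a u v \<longleftrightarrow> u \<in> D \<and> L2G E len v \<and> (\<forall>h\<in>D. a u h = L2inner E len v h)"

definition A_dom :: "nat \<Rightarrow> (nat \<Rightarrow> real) \<Rightarrow> (nat \<Rightarrow> complex) set \<Rightarrow> ((nat \<Rightarrow> complex) \<Rightarrow> (nat \<Rightarrow> complex))
     \<Rightarrow> (nat \<Rightarrow> real \<Rightarrow> complex) set" where
  "A_dom E len Y R = {u. HkG 4 E len u \<and> bv01 E len u \<in> Y \<and>
      (\<lambda>i. bv32 E len u i + R (bv01 E len u) i) \<in> cperp (4*E) Y}"

definition A_op :: "nat \<Rightarrow> (nat \<Rightarrow> real) \<Rightarrow> (nat \<Rightarrow> complex) set \<Rightarrow> ((nat \<Rightarrow> complex) \<Rightarrow> (nat \<Rightarrow> complex))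
     \<Rightarrow> (nat \<Rightarrow> real \<Rightarrow> complex) \<Rightarrow> (nat \<Rightarrow> real \<Rightarrow> complex) \<Rightarrow> bool" where
  "A_op E len Y R u v \<longleftrightarrow> u \<in> A_dom E len Y R \<and> L2G E len v \<and>
     (\<forall>e<E. AE x in lebesgue. x \<in> {0..len e} \<longrightarrow> v e x = nderiv (len e) 4 (u e) x)"

end

(* Green's formula, obtained on each edge by two integrations by parts, shows that for
   u in H^4 with u^{0,1} in Y
     a(u,h) = (u'''', h) - (u^{3,2} + R u^{0,1}, h^{0,1})   for all h in D(a),
   so A_{Y,R} is contained in the associated operator.  Conversely, if a(u,h) = (v,h) on D(a),
   testing with functions supported on a single edge whose values and slopes vanish at both
   ends shows that u'' minus a double primitive of v is orthogonal to the second derivatives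
   of all such test functions.  These second derivatives are exactly the L^2 functions
   orthogonal to 1 and x, so u'' differs from the double primitive by an affine function
   (a du Bois-Reymond argument).  Hence u is in H^4 with u'''' = v, and Green's formula
   reduces the identity to u^{3,2} + R u^{0,1} being orthogonal to h^{0,1} for all h in D(a).
   Cubic Hermite interpolation on each edge attains every boundary vector, so this is the
   condition u^{3,2} + R u^{0,1} in Y^perp. *)

theory Submission
  imports Defs
begin

section \<open>Lebesgue differentiation on the real line\<close>

lemma interval_averages_converge_ae:
  fixes f :: "real \<Rightarrow> 'b::euclidean_space"
  assumes f: "\<And>a b. f integrable_on {a..b}"
  obtains N where "negligible N"
    "\<And>x e. x \<notin> N \<Longrightarrow> 0 < e \<Longrightarrow> \<exists>d>0. \<forall>h. 0 < h \<and> h < d \<longrightarrow>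
        norm (integral {x..x+h} f - h *\<^sub>R f x) \<le> e * h \<and> norm (integral {x-h..x} f - h *\<^sub>R f x) \<le> e * h"
proof -
  have avg: "norm (I - h *\<^sub>R y) \<le> e * h" if "norm (I /\<^sub>R h - y) < e" "0 < h" for I y :: 'b and h e :: real
  proof -
    have "I - h *\<^sub>R y = h *\<^sub>R (I /\<^sub>R h - y)"
      using \<open>0 < h\<close> by (simp add: algebra_simps)
    then show ?thesis using that by simp
  qed
  obtain N1 where N1: "negligible N1"
    "\<And>x e. x \<notin> N1 \<Longrightarrow> 0 < e \<Longrightarrow> \<exists>d>0. \<forall>h. 0 < h \<and> h < d \<longrightarrow> norm (integral {x..x+h} f /\<^sub>R h - f x) < e"
    using integrable_ccontinuous_explicit[of f] f by (auto simp: cbox_interval)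
  \<comment> \<open>Left averages of f are right averages of its reflection.\<close>
  obtain N2 where N2: "negligible N2"
    "\<And>x e. x \<notin> N2 \<Longrightarrow> 0 < e \<Longrightarrow> \<exists>d>0. \<forall>h. 0 < h \<and> h < d \<longrightarrow> norm (integral {x..x+h} (\<lambda>t. f (- t)) /\<^sub>R h - f (- x)) < e"
  proof (rule integrable_ccontinuous_explicit)
    show "(\<lambda>t. f (- t)) integrable_on cbox a b" for a b
      using Henstock_Kurzweil_Integration.integrable_reflect_real[of f "- a" "- b"] f by (simp add: cbox_interval)
  qed (auto simp: cbox_interval)
  have "negligible (uminus ` N2)"
  proof (rule negligible_locally_Lipschitz_image)
    show "\<exists>T B. open T \<and> x \<in> T \<and> (\<forall>y \<in> N2 \<inter> T. norm (- y - - x) \<le> B * norm (y - x))" for x :: real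
      by (rule exI[of _ UNIV], rule exI[of _ 1]) (simp add: abs_minus_commute)
  qed (use N2(1) in auto)
  then show ?thesis
  proof (rule that[OF negligible_Un[OF N1(1)]])
    fix x e :: real assume x: "x \<notin> N1 \<union> uminus ` N2" and e: "0 < e"
    obtain d1 where d1: "d1 > 0" "\<And>h. 0 < h \<Longrightarrow> h < d1 \<Longrightarrow> norm (integral {x..x+h} f /\<^sub>R h - f x) < e"
      using N1(2)[of x e] x e by blast
    have "- x \<notin> N2" using x by (metis UnI2 image_eqI minus_minus)
    moreover have "integral {- x..- x+h} (\<lambda>t. f (- t)) = integral {x-h..x} f" for h
      using Henstock_Kurzweil_Integration.integral_reflect_real[where a = "x - h" and b = x and f = f] by simp
    ultimately obtain d2 where d2: "d2 > 0" "\<And>h. 0 < h \<Longrightarrow> h < d2 \<Longrightarrow> norm (integral {x-h..x} f /\<^sub>R h - f x) < e"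
      using N2(2)[of "- x" e] e by auto
    show "\<exists>d>0. \<forall>h. 0 < h \<and> h < d \<longrightarrow>
        norm (integral {x..x+h} f - h *\<^sub>R f x) \<le> e * h \<and> norm (integral {x-h..x} f - h *\<^sub>R f x) \<le> e * h"
      using d1 d2 by (intro exI[of _ "min d1 d2"]) (auto intro!: avg)
  qed
qed

lemma has_vector_derivative_at_if_one_sided:
  fixes F :: "real \<Rightarrow> 'b::real_normed_vector"
  assumes "\<And>e. 0 < e \<Longrightarrow> \<exists>d>0. \<forall>h. 0 < h \<and> h < d \<longrightarrow>
      norm (F (x + h) - F x - h *\<^sub>R D) \<le> e * h \<and> norm (F x - F (x - h) - h *\<^sub>R D) \<le> e * h"
  shows "(F has_vector_derivative D) (at x)"
  unfolding has_vector_derivative_def has_derivative_at_alt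
proof (intro conjI allI impI bounded_linear_scaleR_left)
  fix e :: real assume "0 < e"
  then obtain d where d: "d > 0" "\<And>h. 0 < h \<Longrightarrow> h < d \<Longrightarrow>
      norm (F (x + h) - F x - h *\<^sub>R D) \<le> e * h \<and> norm (F x - F (x - h) - h *\<^sub>R D) \<le> e * h"
    using assms by blast
  show "\<exists>d>0. \<forall>y. norm (y - x) < d \<longrightarrow> norm (F y - F x - (y - x) *\<^sub>R D) \<le> e * norm (y - x)"
  proof (intro exI[of _ d] conjI allI impI)
    fix y assume y: "norm (y - x) < d"
    consider "y = x" | "x < y" | "y < x" by linarith
    then show "norm (F y - F x - (y - x) *\<^sub>R D) \<le> e * norm (y - x)"
    proof cases
      case 2
      then show ?thesis using d(2)[of "y - x"] y by auto
    next
      case 3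
      have "F y - F x - (y - x) *\<^sub>R D = - (F x - F (x - (x - y)) - (x - y) *\<^sub>R D)"
        by (simp add: algebra_simps)
      then show ?thesis using d(2)[of "x - y"] y 3 by (simp only: norm_minus_cancel) auto
    qed simp
  qed (rule d(1))
qed

lemma has_vector_derivative_indefinite_integral_ae:
  fixes g :: "real \<Rightarrow> 'b::euclidean_space"
  assumes g: "set_integrable lebesgue {a..b} g"
    and F: "\<And>x. x \<in> {a..b} \<Longrightarrow> F x = F a + (LINT t:{a..x}|lebesgue. g t)"
  shows "AE x in lebesgue. x \<in> {a<..<b} \<longrightarrow> (F has_vector_derivative g x) (at x)"
proof -
  have gi: "g integrable_on {a..b}" by (rule set_lebesgue_integral_eq_integral(1)[OF g])
  define f where "f x = (if x \<in> {a..b} then g x else 0)" for x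
  have "f integrable_on UNIV" using gi integrable_restrict_UNIV unfolding f_def by blast
  then have "f integrable_on {c..d}" for c d by (rule integrable_on_subinterval) auto
  then obtain N where N: "negligible N"
    "\<And>x e. x \<notin> N \<Longrightarrow> 0 < e \<Longrightarrow> \<exists>d>0. \<forall>h. 0 < h \<and> h < d \<longrightarrow>
        norm (integral {x..x+h} f - h *\<^sub>R f x) \<le> e * h \<and> norm (integral {x-h..x} f - h *\<^sub>R f x) \<le> e * h"
    using interval_averages_converge_ae by metis
  have increment: "F z - F y = integral {y..z} f" if "a \<le> y" "y \<le> z" "z \<le> b" for y z
  proof -
    have "(LINT t:{a..x}|lebesgue. g t) = integral {a..x} g" if "x \<in> {a..b}" for x
      by (rule set_lebesgue_integral_eq_integral(2), rule set_integrable_subset[OF g]) (use that in auto)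
    moreover have "integral {a..y} g + integral {y..z} g = integral {a..z} g"
      using Henstock_Kurzweil_Integration.integral_combine[of a y z g] integrable_on_subinterval[OF gi, of a z] that
      by simp
    moreover have "integral {y..z} f = integral {y..z} g"
      by (rule integral_cong) (use that in \<open>auto simp: f_def\<close>)
    ultimately show ?thesis using F[of y] F[of z] that by (simp add: algebra_simps)
  qed
  have "AE x in lebesgue. x \<notin> N" using N(1) by (simp add: negligible_iff_null_sets AE_not_in)
  then show ?thesis
  proof (rule eventually_mono, intro impI has_vector_derivative_at_if_one_sided)
    fix x e :: real assume "x \<notin> N" "x \<in> {a<..<b}" "0 < e"
    then obtain d where "d > 0" "\<forall>h. 0 < h \<and> h < d \<longrightarrow>
        norm (integral {x..x+h} f - h *\<^sub>R g x) \<le> e * h \<and> norm (integral {x-h..x} f - h *\<^sub>R g x) \<le> e * h"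
      using N(2)[of x e] by (auto simp: f_def)
    with \<open>x \<in> {a<..<b}\<close> show "\<exists>d>0. \<forall>h. 0 < h \<and> h < d \<longrightarrow>
        norm (F (x + h) - F x - h *\<^sub>R g x) \<le> e * h \<and> norm (F x - F (x - h) - h *\<^sub>R g x) \<le> e * h"
      by (intro exI[of _ "min d (min (x - a) (b - x))"]) (auto simp: increment)
  qed
qed

lemma borel_measurable_cnj[measurable (raw)]:
  "f \<in> borel_measurable M \<Longrightarrow> (\<lambda>x. cnj (f x :: complex)) \<in> borel_measurable M"
  using borel_measurable_continuous_onI[of "\<lambda>z::complex. cnj z"] continuous_on_cnj[OF continuous_on_id]
  by (auto intro: measurable_compose)

lemma set_integrable_cnj:
  fixes g :: "'a \<Rightarrow> complex"
  shows "set_integrable M S g \<Longrightarrow> set_integrable M S (\<lambda>x. cnj (g x))"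
  unfolding set_integrable_def by (drule integrable_cnj) simp

lemma set_integral_cnj:
  fixes g :: "'a \<Rightarrow> complex"
  shows "(LINT t:S|M. cnj (g t)) = cnj (LINT t:S|M. g t)"
  unfolding set_lebesgue_integral_def
  using Bochner_Integration.integral_cnj[of M "\<lambda>t. indicator S t *\<^sub>R g t"] by simp

lemma set_integral_singleton:
  fixes f :: "real \<Rightarrow> 'b::{banach, second_countable_topology}"
  shows "(LINT t:{a}|lebesgue. f t) = 0"
  unfolding set_lebesgue_integral_def
proof (rule integral_eq_zero_AE)
  have "AE t in lebesgue. t \<notin> {a}"
    by (rule AE_not_in) (simp flip: negligible_iff_null_sets)
  then show "AE t in lebesgue. indicator {a} t *\<^sub>R f t = 0"
    by eventually_elim simp
qed

lemma set_integral_cong_AE_subset: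
  fixes g h :: "real \<Rightarrow> 'b::{banach, second_countable_topology}"
  assumes "set_integrable lebesgue S g" "set_integrable lebesgue S h"
    and "T \<in> sets lebesgue" "T \<subseteq> S"
    and "AE x in lebesgue. x \<in> S \<longrightarrow> g x = h x"
  shows "(LINT t:T|lebesgue. g t) = (LINT t:T|lebesgue. h t)"
proof -
  have "set_integrable lebesgue T g" "set_integrable lebesgue T h"
    using assms(1-4) by (auto intro: set_integrable_subset)
  then show ?thesis
    unfolding set_lebesgue_integral_def set_integrable_def
    by (intro integral_cong_AE borel_measurable_integrable)
      (use assms(4,5) in \<open>auto simp: indicator_def elim!: eventually_mono\<close>)
qed

lemma borel_measurable_lebesgue_AE_cong:
  fixes f g :: "'a::euclidean_space \<Rightarrow> 'b::topological_space"
  assumes "f \<in> borel_measurable lebesgue" "AE x in lebesgue. f x = g x"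
  shows "g \<in> borel_measurable lebesgue"
proof (rule borel_measurableI)
  fix S :: "'b set" assume "open S"
  then have "f -` S \<inter> space lebesgue \<in> sets lebesgue"
    using measurable_sets[OF assms(1)] by (simp add: borel_open)
  then show "g -` S \<inter> space lebesgue \<in> sets lebesgue"
    by (rule completion.in_sets_AE[rotated]) (use assms(2) in auto)
qed

lemma L2_on_set_integrable:
  assumes "L2_on {a..b} g"
  shows "set_integrable lebesgue {a..b} g"
proof -
  have m: "(\<lambda>x. indicator {a..b} x *\<^sub>R g x) \<in> borel_measurable lebesgue"
    using assms by (simp add: L2_on_def set_borel_measurable_def)
  have i2: "integrable lebesgue (\<lambda>x. indicator {a..b} x *\<^sub>R (cmod (g x))\<^sup>2)"
    using assms by (simp add: L2_on_def set_integrable_def)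
  have i1: "integrable lebesgue (\<lambda>x. indicator {a..b} x *\<^sub>R (1::real))"
    by (intro integrable_scaleR_left integrable_real_indicator) (auto simp: emeasure_lborel_Icc_eq)
  have "norm t \<le> 1 + (norm t)\<^sup>2" for t :: complex
    using sum_squares_bound[of 1 "norm t"] norm_ge_zero[of t] unfolding power2_eq_square by linarith
  then show ?thesis unfolding set_integrable_def
    by (intro Bochner_Integration.integrable_bound[OF Bochner_Integration.integrable_add[OF i1 i2] m] AE_I2)
      (simp add: indicator_def)
qed

lemma L2_on_continuous:
  assumes "continuous_on {a..b} g"
  shows "L2_on {a..b} g"
proof -
  have "set_integrable lebesgue {a..b} g" "set_integrable lebesgue {a..b} (\<lambda>x. (cmod (g x))\<^sup>2)"
    using assms by (auto intro!: absolutely_integrable_continuous_real continuous_intros)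
  then show ?thesis
    by (auto simp: L2_on_def set_borel_measurable_def set_integrable_def)
qed

lemma L2_on_AE_cong:
  assumes L: "L2_on S g" and S: "S \<in> sets lebesgue" and ae: "AE x in lebesgue. x \<in> S \<longrightarrow> g x = h x"
  shows "L2_on S h"
proof -
  have m: "(\<lambda>x. indicator S x *\<^sub>R g x) \<in> borel_measurable lebesgue"
    using L by (simp add: L2_on_def set_borel_measurable_def)
  have i2: "integrable lebesgue (\<lambda>x. indicator S x *\<^sub>R (cmod (g x))\<^sup>2)"
    using L by (simp add: L2_on_def set_integrable_def)
  have ae1: "AE x in lebesgue. indicator S x *\<^sub>R g x = indicator S x *\<^sub>R h x"
    using ae by eventually_elim (auto simp: indicator_def)
  have ae2: "AE x in lebesgue. indicator S x *\<^sub>R (cmod (g x))\<^sup>2 = indicator S x *\<^sub>R (cmod (h x))\<^sup>2"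
    using ae by eventually_elim (auto simp: indicator_def)
  have "(\<lambda>x. indicator S x *\<^sub>R (cmod (h x))\<^sup>2) \<in> borel_measurable lebesgue"
    by (rule borel_measurable_lebesgue_AE_cong[OF borel_measurable_integrable[OF i2] ae2])
  then have "integrable lebesgue (\<lambda>x. indicator S x *\<^sub>R (cmod (h x))\<^sup>2)"
    using integrable_cong_AE[OF borel_measurable_integrable[OF i2] _ ae2] i2 by simp
  then show ?thesis
    using borel_measurable_lebesgue_AE_cong[OF m ae1]
    by (simp add: L2_on_def set_borel_measurable_def set_integrable_def)
qed

lemma L2_on_diff:
  assumes a: "L2_on S a" and b: "L2_on S b"
  shows "L2_on S (\<lambda>x. a x - b x)"
proof -
  have ma: "(\<lambda>x. indicator S x *\<^sub>R a x) \<in> borel_measurable lebesgue"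
    and mb: "(\<lambda>x. indicator S x *\<^sub>R b x) \<in> borel_measurable lebesgue"
    using a b by (simp_all add: L2_on_def set_borel_measurable_def)
  have ia: "integrable lebesgue (\<lambda>x. indicator S x *\<^sub>R (cmod (a x))\<^sup>2)"
    and ib: "integrable lebesgue (\<lambda>x. indicator S x *\<^sub>R (cmod (b x))\<^sup>2)"
    using a b by (simp_all add: L2_on_def set_integrable_def)
  have eq: "(\<lambda>x. indicator S x *\<^sub>R (a x - b x)) = (\<lambda>x. indicator S x *\<^sub>R a x - indicator S x *\<^sub>R b x)"
    by (simp add: scaleR_diff_right)
  have m: "(\<lambda>x. indicator S x *\<^sub>R (a x - b x)) \<in> borel_measurable lebesgue"
    unfolding eq using ma mb by measurable
  have "(\<lambda>x. (cmod (indicator S x *\<^sub>R (a x - b x)))\<^sup>2) \<in> borel_measurable lebesgue"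
    using m by measurable
  also have "(\<lambda>x. (cmod (indicator S x *\<^sub>R (a x - b x)))\<^sup>2) = (\<lambda>x. indicator S x *\<^sub>R (cmod (a x - b x))\<^sup>2)"
    by (auto simp: indicator_def fun_eq_iff)
  finally have m2: "\<dots> \<in> borel_measurable lebesgue" .
  have "(cmod (a x - b x))\<^sup>2 \<le> 2 * (cmod (a x))\<^sup>2 + 2 * (cmod (b x))\<^sup>2" for x
  proof -
    have "(cmod (a x - b x))\<^sup>2 \<le> (cmod (a x) + cmod (b x))\<^sup>2"
      by (intro power_mono norm_triangle_ineq4) simp
    also have "\<dots> \<le> 2 * (cmod (a x))\<^sup>2 + 2 * (cmod (b x))\<^sup>2"
      using sum_squares_bound[of "cmod (a x)" "cmod (b x)"] by (simp add: power2_eq_square algebra_simps)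
    finally show ?thesis .
  qed
  then have "integrable lebesgue (\<lambda>x. indicator S x *\<^sub>R (cmod (a x - b x))\<^sup>2)"
    by (intro Bochner_Integration.integrable_bound[OF Bochner_Integration.integrable_add[OF
          integrable_mult_right[OF ia, of 2] integrable_mult_right[OF ib, of 2]] m2] AE_I2)
      (auto simp: indicator_def)
  then show ?thesis using m by (simp add: L2_on_def set_borel_measurable_def set_integrable_def)
qed

lemma L2_on_mult_cnj_integrable:
  assumes a: "L2_on S a" and b: "L2_on S b"
  shows "set_integrable lebesgue S (\<lambda>x. a x * cnj (b x))"
proof -
  have ma: "(\<lambda>x. indicator S x *\<^sub>R a x) \<in> borel_measurable lebesgue"
    and mb: "(\<lambda>x. indicator S x *\<^sub>R b x) \<in> borel_measurable lebesgue"
    using a b by (simp_all add: L2_on_def set_borel_measurable_def)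
  have ia: "integrable lebesgue (\<lambda>x. indicator S x *\<^sub>R (cmod (a x))\<^sup>2)"
    and ib: "integrable lebesgue (\<lambda>x. indicator S x *\<^sub>R (cmod (b x))\<^sup>2)"
    using a b by (simp_all add: L2_on_def set_integrable_def)
  have "(\<lambda>x. (indicator S x *\<^sub>R a x) * cnj (indicator S x *\<^sub>R b x)) \<in> borel_measurable lebesgue"
    using ma mb by measurable
  also have "(\<lambda>x. (indicator S x *\<^sub>R a x) * cnj (indicator S x *\<^sub>R b x)) = (\<lambda>x. indicator S x *\<^sub>R (a x * cnj (b x)))"
    by (auto simp: indicator_def fun_eq_iff)
  finally have m: "\<dots> \<in> borel_measurable lebesgue" .
  have "cmod (a x) * cmod (b x) \<le> (cmod (a x))\<^sup>2 + (cmod (b x))\<^sup>2" for x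
    using sum_squares_bound[of "cmod (a x)" "cmod (b x)"]
      mult_nonneg_nonneg[OF norm_ge_zero[of "a x"] norm_ge_zero[of "b x"]]
    by linarith
  then show ?thesis unfolding set_integrable_def
    by (intro Bochner_Integration.integrable_bound[OF Bochner_Integration.integrable_add[OF ia ib] m] AE_I2)
      (auto simp: indicator_def norm_mult)
qed

lemma nderiv_0[simp]: "nderiv l 0 f = f"
  by (simp add: nderiv_def)

lemma nderiv_Suc: "nderiv l (Suc j) f x = vector_derivative (nderiv l j f) (at x within {0..l})"
  by (simp add: nderiv_def)

lemma nderiv_numeral:
  "nderiv l 1 f = nderiv l (Suc 0) f" "nderiv l 2 f = nderiv l (Suc 1) f"
  "nderiv l 3 f = nderiv l (Suc 2) f" "nderiv l 4 f = nderiv l (Suc 3) f"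
  by (simp_all add: numeral_eq_Suc)

lemma vector_derivative_within_interval:
  assumes "0 < l" "x \<in> {0..l}" "(F has_vector_derivative D) (at x within {0..l})"
  shows "vector_derivative F (at x within {0..l}) = D"
  using vector_derivative_within_cbox[of 0 l x F D] assms by simp

lemma vector_derivative_within_cong:
  assumes "\<And>y. y \<in> S \<Longrightarrow> F y = G y" "x \<in> S"
  shows "vector_derivative F (at x within S) = vector_derivative G (at x within S)"
proof -
  have "(F has_vector_derivative D) (at x within S) \<longleftrightarrow> (G has_vector_derivative D) (at x within S)" for D
    using has_vector_derivative_transform[of x S G F D] has_vector_derivative_transform[of x S F G D] assms
    by auto
  then show ?thesis unfolding vector_derivative_def by simp
qed

lemma nderiv_Suc_cong:
  assumes "\<And>y. y \<in> {0..l} \<Longrightarrow> nderiv l j f y = G y" "x \<in> {0..l}"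
  shows "nderiv l (Suc j) f x = vector_derivative G (at x within {0..l})"
  unfolding nderiv_Suc by (rule vector_derivative_within_cong[OF assms])

lemma nderiv_Suc_eqI:
  assumes "0 < l" "\<And>y. y \<in> {0..l} \<Longrightarrow> nderiv l j f y = G y" "x \<in> {0..l}"
    and "(G has_vector_derivative D) (at x within {0..l})"
  shows "nderiv l (Suc j) f x = D"
  using nderiv_Suc_cong[OF assms(2,3)] vector_derivative_within_interval[OF assms(1,3,4)] by simp

lemma set_integral_eq_integral_subinterval:
  fixes g :: "real \<Rightarrow> 'b::euclidean_space"
  assumes "set_integrable lebesgue {a..b} g" "{c..d} \<subseteq> {a..b}"
  shows "(LINT t:{c..d}|lebesgue. g t) = integral {c..d} g"
  by (rule set_lebesgue_integral_eq_integral(2)[OF set_integrable_subset[OF assms(1)]]) (use assms(2) in auto)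

lemma continuous_on_indefinite_integral:
  fixes g :: "real \<Rightarrow> 'b::euclidean_space"
  assumes g: "set_integrable lebesgue {0..l} g"
    and F: "\<And>x. x \<in> {0..l} \<Longrightarrow> F x = c + (LINT t:{0..x}|lebesgue. g t)"
  shows "continuous_on {0..l} F"
proof -
  have "continuous_on {0..l} (\<lambda>x. c + integral {0..x} g)"
    by (intro continuous_intros indefinite_integral_continuous_1 set_lebesgue_integral_eq_integral(1)[OF g])
  moreover have "c + integral {0..x} g = F x" if "x \<in> {0..l}" for x
    using F[OF that] set_integral_eq_integral_subinterval[OF g, of 0 x] that by simp
  ultimately show ?thesis by (rule continuous_on_eq)
qed

lemma indefinite_integral_has_vector_derivative:
  fixes g :: "real \<Rightarrow> 'b::euclidean_space"
  assumes g: "continuous_on {0..l} g"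
    and F: "\<And>x. x \<in> {0..l} \<Longrightarrow> F x = c + (LINT t:{0..x}|lebesgue. g t)"
    and x: "x \<in> {0..l}"
  shows "(F has_vector_derivative g x) (at x within {0..l})"
proof -
  have "((\<lambda>u. c + integral {0..u} g) has_vector_derivative g x) (at x within {0..l})"
    using integral_has_vector_derivative[OF g x] by (auto intro!: derivative_eq_intros)
  moreover have "F y = c + integral {0..y} g" if "y \<in> {0..l}" for y
    using F[OF that] set_integral_eq_integral_subinterval[OF absolutely_integrable_continuous_real[OF g], of 0 y] that
    by simp
  ultimately show ?thesis
    by (rule has_vector_derivative_transform[OF x, rotated])
qed

lemma eq_set_integral_of_continuous_derivative:
  fixes F :: "real \<Rightarrow> 'b::euclidean_space"
  assumes d: "\<And>x. x \<in> {0..l} \<Longrightarrow> (F has_vector_derivative f x) (at x within {0..l})"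
    and f: "continuous_on {0..l} f" and x: "x \<in> {0..l}"
  shows "F x = F 0 + (LINT t:{0..x}|lebesgue. f t)"
proof -
  have "(f has_integral F x - F 0) {0..x}"
    by (rule fundamental_theorem_of_calculus)
      (use x in \<open>auto intro: has_vector_derivative_within_subset[OF d]\<close>)
  then show ?thesis
    using set_integral_eq_integral_subinterval[OF absolutely_integrable_continuous_real[OF f], of 0 x] x
    by (simp add: integral_unique)
qed

lemma vector_derivative_indefinite_integral_ae:
  fixes g :: "real \<Rightarrow> 'b::euclidean_space"
  assumes l: "0 < l" and g: "set_integrable lebesgue {0..l} g"
    and F: "\<And>x. x \<in> {0..l} \<Longrightarrow> F x = F 0 + (LINT t:{0..x}|lebesgue. g t)"
  shows "AE x in lebesgue. x \<in> {0..l} \<longrightarrow> vector_derivative F (at x within {0..l}) = g x"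
proof -
  have "AE x in lebesgue. x \<in> {0<..<l} \<longrightarrow> (F has_vector_derivative g x) (at x)"
    by (rule has_vector_derivative_indefinite_integral_ae[OF g F])
  moreover have "AE x in lebesgue. x \<notin> {0, l}"
    by (rule AE_not_in) (simp flip: negligible_iff_null_sets)
  ultimately show ?thesis
  proof eventually_elim
    case (elim x)
    then show ?case
      using vector_derivative_within_interval[OF l _ has_vector_derivative_at_within] by auto
  qed
qed

lemma Hk_mono: "Hk k l f \<Longrightarrow> m \<le> k \<Longrightarrow> Hk m l f"
  unfolding Hk_def by (meson order_less_le_trans)

lemma
  assumes H: "Hk k l f" and l: "0 < l" and j: "j < k"
  shows Hk_nderiv_L2: "L2_on {0..l} (nderiv l (Suc j) f)"
    and Hk_nderiv_integral:
      "\<And>x. x \<in> {0..l} \<Longrightarrow> nderiv l j f x = nderiv l j f 0 + (LINT t:{0..x}|lebesgue. nderiv l (Suc j) f t)"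
proof -
  obtain g where g: "L2_on {0..l} g"
    and G: "\<And>x. x \<in> {0..l} \<Longrightarrow> nderiv l j f x = nderiv l j f 0 + (LINT t:{0..x}|lebesgue. g t)"
    using H j unfolding Hk_def by blast
  have "AE x in lebesgue. x \<in> {0..l} \<longrightarrow> vector_derivative (nderiv l j f) (at x within {0..l}) = g x"
    by (rule vector_derivative_indefinite_integral_ae[OF l L2_on_set_integrable[OF g] G])
  then have ae: "AE x in lebesgue. x \<in> {0..l} \<longrightarrow> g x = nderiv l (Suc j) f x"
    by (rule eventually_mono) (simp add: nderiv_Suc)
  show L: "L2_on {0..l} (nderiv l (Suc j) f)" by (rule L2_on_AE_cong[OF g _ ae]) simp
  fix x assume x: "x \<in> {0..l}"
  have "(LINT t:{0..x}|lebesgue. g t) = (LINT t:{0..x}|lebesgue. nderiv l (Suc j) f t)"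
  proof (rule set_integral_cong_AE_subset[OF _ _ _ _ ae])
    show "set_integrable lebesgue {0..l} g" "set_integrable lebesgue {0..l} (nderiv l (Suc j) f)"
      using g L by (simp_all add: L2_on_set_integrable)
  qed (use x in auto)
  then show "nderiv l j f x = nderiv l j f 0 + (LINT t:{0..x}|lebesgue. nderiv l (Suc j) f t)"
    using G[OF x] by simp
qed

lemma Hk_continuous_nderiv:
  assumes "Hk k l f" "0 < l" "j < k"
  shows "continuous_on {0..l} (nderiv l j f)"
  using continuous_on_indefinite_integral[OF L2_on_set_integrable[OF Hk_nderiv_L2[OF assms]]
      Hk_nderiv_integral[OF assms]] .

lemma Hk_has_vector_derivative:
  assumes "Hk k l f" "0 < l" "Suc j < k" "x \<in> {0..l}"
  shows "(nderiv l j f has_vector_derivative nderiv l (Suc j) f x) (at x within {0..l})"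
  using indefinite_integral_has_vector_derivative[OF Hk_continuous_nderiv[OF assms(1,2,3)]
      Hk_nderiv_integral[OF assms(1,2) Suc_lessD[OF assms(3)]] assms(4)] .

lemma Hk_0: "Hk 0 l u"
  by (simp add: Hk_def)

lemma Hk_SucI:
  assumes "Hk k l u" "L2_on {0..l} g"
    and "\<And>x. x \<in> {0..l} \<Longrightarrow> nderiv l k u x = nderiv l k u 0 + (LINT t:{0..x}|lebesgue. g t)"
  shows "Hk (Suc k) l u"
  using assms unfolding Hk_def by (metis less_Suc_eq)

lemma nderiv_1_eq:
  assumes "0 < l" "x \<in> {0..l}" "(F has_vector_derivative D) (at x within {0..l})"
  shows "nderiv l 1 F x = D"
  unfolding nderiv_numeral by (rule nderiv_Suc_eqI[OF assms(1) _ assms(2,3)]) simp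

lemma Hk2_if_C2:
  assumes l: "0 < l"
    and d0: "\<And>x. x \<in> {0..l} \<Longrightarrow> (F0 has_vector_derivative F1 x) (at x within {0..l})"
    and d1: "\<And>x. x \<in> {0..l} \<Longrightarrow> (F1 has_vector_derivative F2 x) (at x within {0..l})"
    and c2: "continuous_on {0..l} F2"
  shows "Hk 2 l F0"
proof -
  have 0: "0 \<in> {0..l}" using l by simp
  have c1: "continuous_on {0..l} F1" by (rule continuous_on_vector_derivative) (rule d1)
  have "Hk (Suc 0) l F0"
    by (rule Hk_SucI[OF Hk_0 L2_on_continuous[OF c1]])
      (simp only: nderiv_0 eq_set_integral_of_continuous_derivative[OF d0 c1])
  moreover have "nderiv l (Suc 0) F0 x = nderiv l (Suc 0) F0 0 + (LINT t:{0..x}|lebesgue. F2 t)"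
    if "x \<in> {0..l}" for x
    using nderiv_1_eq[OF l that d0] nderiv_1_eq[OF l 0 d0] eq_set_integral_of_continuous_derivative[OF d1 c2 that]
      that l by simp
  ultimately have "Hk (Suc (Suc 0)) l F0"
    by (rule Hk_SucI[OF _ L2_on_continuous[OF c2]])
  then show ?thesis by (simp add: numeral_2_eq_2)
qed

section \<open>Integration by parts\<close>

lemma sigma_finite_lebesgue_real: "sigma_finite_measure (lebesgue :: real measure)"
  unfolding sigma_finite_measure_def
proof (intro exI[of _ "range (\<lambda>n::nat. {- real n..real n})"] conjI)
  show "\<Union> (range (\<lambda>n::nat. {- real n..real n})) = space lebesgue"
  proof auto
    show "\<exists>n. - real n \<le> x \<and> x \<le> real n" for x :: real
      by (rule exI[of _ "nat \<lceil>\<bar>x\<bar>\<rceil>"]) linarith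
  qed
qed (auto simp: emeasure_lborel_Icc_eq)

interpretation lebesgue_real_pair: pair_sigma_finite "lebesgue :: real measure" "lebesgue :: real measure"
  by (intro pair_sigma_finite.intro sigma_finite_lebesgue_real)

lemma borel_measurable_lebesgue_ident[measurable]: "(\<lambda>x::real. x) \<in> borel_measurable lebesgue"
  by (rule measurable_completion) simp

lemma set_integrable_continuous_mult:
  fixes f g :: "real \<Rightarrow> complex"
  assumes f: "continuous_on {a..b} f" and g: "set_integrable lebesgue {a..b} g"
  shows "set_integrable lebesgue {a..b} (\<lambda>x. f x * g x)"
proof (rule absolutely_integrable_bounded_measurable_product[OF bilinear_times _ _ _ g])
  show "f \<in> borel_measurable (lebesgue_on {a..b})"
    by (rule continuous_imp_measurable_on_sets_lebesgue[OF f]) simp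
  show "bounded (f ` {a..b})"
    by (rule compact_imp_bounded[OF compact_continuous_image[OF f]]) simp
qed simp

lemma set_integral_triangle_swap:
  fixes p q :: "real \<Rightarrow> complex"
  assumes p: "set_integrable lebesgue {0..l} p" and q: "set_integrable lebesgue {0..l} q"
  shows "(LINT x:{0..l}|lebesgue. q x * (LINT t:{0..x}|lebesgue. p t))
       = (LINT t:{0..l}|lebesgue. p t * (LINT x:{t..l}|lebesgue. q x))"
proof -
  define pp where "pp = (\<lambda>t::real. indicator {0..l} t *\<^sub>R p t)"
  define qq where "qq = (\<lambda>x::real. indicator {0..l} x *\<^sub>R q x)"
  have ppi: "integrable lebesgue pp" and qqi: "integrable lebesgue qq"
    using p q by (simp_all add: pp_def qq_def set_integrable_def)
  then have [measurable]: "pp \<in> borel_measurable lebesgue" "qq \<in> borel_measurable lebesgue" by auto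
  define f where "f x t = (if t \<le> x then pp t * qq x else 0)" for x t :: real
  have "integrable (lebesgue \<Otimes>\<^sub>M lebesgue) (\<lambda>z. cmod (qq (fst z)) * cmod (pp (snd z)))"
  proof (rule lebesgue_real_pair.Fubini_integrable)
    show "integrable lebesgue (\<lambda>x. LINT y|lebesgue. norm (cmod (qq (fst (x, y))) * cmod (pp (snd (x, y)))))"
      using integrable_mult_left[OF integrable_norm[OF qqi], of "LINT y|lebesgue. cmod (pp y)"]
      by (simp add: abs_mult)
  qed (use integrable_norm[OF ppi] in auto)
  then have fi: "integrable (lebesgue \<Otimes>\<^sub>M lebesgue) (\<lambda>(x, t). f x t)"
    by (rule Bochner_Integration.integrable_bound) (auto simp: f_def norm_mult split: prod.splits)
  have inner_t: "(LINT t|lebesgue. f x t) = indicator {0..l} x *\<^sub>R (q x * (LINT t:{0..x}|lebesgue. p t))" for x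
  proof (cases "x \<in> {0..l}")
    case True
    then have "(\<lambda>t. f x t) = (\<lambda>t. q x * (indicator {0..x} t *\<^sub>R p t))"
      by (auto simp: f_def pp_def qq_def indicator_def fun_eq_iff)
    then have "(LINT t|lebesgue. f x t) = q x * (LINT t:{0..x}|lebesgue. p t)"
      unfolding set_lebesgue_integral_def by (simp only: integral_mult_right_zero)
    then show ?thesis using True by simp
  next
    case False
    then have "(\<lambda>t. f x t) = (\<lambda>t. 0)" by (simp add: f_def qq_def fun_eq_iff)
    then show ?thesis using False by simp
  qed
  have inner_x: "(LINT x|lebesgue. f x t) = indicator {0..l} t *\<^sub>R (p t * (LINT x:{t..l}|lebesgue. q x))" for t
  proof (cases "t \<in> {0..l}")
    case True
    then have "(\<lambda>x. f x t) = (\<lambda>x. p t * (indicator {t..l} x *\<^sub>R q x))"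
      by (auto simp: f_def pp_def qq_def indicator_def fun_eq_iff)
    then have "(LINT x|lebesgue. f x t) = p t * (LINT x:{t..l}|lebesgue. q x)"
      unfolding set_lebesgue_integral_def by (simp only: integral_mult_right_zero)
    then show ?thesis using True by simp
  next
    case False
    then have "(\<lambda>x. f x t) = (\<lambda>x. 0)" by (simp add: f_def pp_def fun_eq_iff)
    then show ?thesis using False by simp
  qed
  show ?thesis
    using lebesgue_real_pair.Fubini_integral[OF fi] unfolding inner_t inner_x
    by (simp add: set_lebesgue_integral_def)
qed

lemma set_integral_combine:
  fixes g :: "real \<Rightarrow> 'b::euclidean_space"
  assumes g: "set_integrable lebesgue {a..b} g" and "a \<le> c" "c \<le> b"
  shows "(LINT t:{a..b}|lebesgue. g t) = (LINT t:{a..c}|lebesgue. g t) + (LINT t:{c..b}|lebesgue. g t)"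
  using Henstock_Kurzweil_Integration.integral_combine[OF assms(2,3) set_lebesgue_integral_eq_integral(1)[OF g]]
    set_integral_eq_integral_subinterval[OF g] assms(2,3) by simp

lemma set_integral_by_parts:
  fixes P p q Q :: "real \<Rightarrow> complex"
  assumes l: "0 \<le> l"
    and dP: "\<And>x. x \<in> {0..l} \<Longrightarrow> (P has_vector_derivative p x) (at x within {0..l})"
    and pc: "continuous_on {0..l} p"
    and qi: "set_integrable lebesgue {0..l} q"
    and Q: "\<And>x. x \<in> {0..l} \<Longrightarrow> Q x = Q 0 + (LINT t:{0..x}|lebesgue. q t)"
  shows "(LINT x:{0..l}|lebesgue. P x * q x) + (LINT x:{0..l}|lebesgue. p x * Q x) = P l * Q l - P 0 * Q 0"
proof -
  have pi: "set_integrable lebesgue {0..l} p" by (rule absolutely_integrable_continuous_real[OF pc])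
  have Pc: "continuous_on {0..l} P" by (rule continuous_on_vector_derivative) (rule dP)
  have Qc: "continuous_on {0..l} Q" by (rule continuous_on_indefinite_integral[OF qi Q])
  have P: "P x - P 0 = (LINT t:{0..x}|lebesgue. p t)" if "x \<in> {0..l}" for x
    using eq_set_integral_of_continuous_derivative[OF dP pc that] by simp
  have Q_tail: "Q l - Q t = (LINT x:{t..l}|lebesgue. q x)" if "t \<in> {0..l}" for t
    using Q[of l] Q[OF that] set_integral_combine[OF qi, of t] that l by simp
  have "(LINT x:{0..l}|lebesgue. q x * (P x - P 0)) = (LINT x:{0..l}|lebesgue. q x * (LINT t:{0..x}|lebesgue. p t))"
    by (rule set_lebesgue_integral_cong) (simp_all add: P)
  also have "\<dots> = (LINT t:{0..l}|lebesgue. p t * (LINT x:{t..l}|lebesgue. q x))"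
    by (rule set_integral_triangle_swap[OF pi qi])
  also have "\<dots> = (LINT t:{0..l}|lebesgue. p t * (Q l - Q t))"
    by (rule set_lebesgue_integral_cong) (simp_all add: Q_tail)
  finally have swap: "(LINT x:{0..l}|lebesgue. q x * (P x - P 0)) = (LINT t:{0..l}|lebesgue. p t * (Q l - Q t))" .
  have i1: "set_integrable lebesgue {0..l} (\<lambda>x. q x * (P x - P 0))"
    using set_integrable_continuous_mult[of 0 l "\<lambda>x. P x - P 0" q] Pc qi
    by (simp add: continuous_on_diff mult.commute)
  have i2: "set_integrable lebesgue {0..l} (\<lambda>t. p t * (Q l - Q t))"
    by (rule absolutely_integrable_continuous_real) (intro continuous_intros pc Qc)
  have "(LINT x:{0..l}|lebesgue. P x * q x) = (LINT x:{0..l}|lebesgue. q x * (P x - P 0) + P 0 * q x)"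
    by (simp add: algebra_simps)
  also have "\<dots> = (LINT x:{0..l}|lebesgue. q x * (P x - P 0)) + P 0 * (Q l - Q 0)"
    using set_integral_add(2)[OF i1, of "\<lambda>x. P 0 * q x"] qi Q[of l] l by simp
  finally have Pq: "(LINT x:{0..l}|lebesgue. P x * q x) = (LINT x:{0..l}|lebesgue. q x * (P x - P 0)) + P 0 * (Q l - Q 0)" .
  have "(LINT x:{0..l}|lebesgue. p x * Q x) = (LINT x:{0..l}|lebesgue. Q l * p x - p x * (Q l - Q x))"
    by (simp add: algebra_simps)
  also have "\<dots> = Q l * (P l - P 0) - (LINT t:{0..l}|lebesgue. p t * (Q l - Q t))"
    using set_integral_diff(2)[OF _ i2, of "\<lambda>x. Q l * p x"] pi P[of l] l by simp
  finally have pQ: "(LINT x:{0..l}|lebesgue. p x * Q x) = Q l * (P l - P 0) - (LINT t:{0..l}|lebesgue. p t * (Q l - Q t))" .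
  show ?thesis unfolding Pq pQ swap by (simp add: algebra_simps)
qed

section \<open>Green's formula\<close>

lemma green_formula_edge:
  fixes u h :: "real \<Rightarrow> complex"
  assumes l: "0 < l" and u: "Hk 4 l u" and h: "Hk 2 l h"
  shows "(LINT x:{0..l}|lebesgue. nderiv l 2 u x * cnj (nderiv l 2 h x)) =
         (LINT x:{0..l}|lebesgue. nderiv l 4 u x * cnj (h x))
         + nderiv l 2 u l * cnj (nderiv l 1 h l) - nderiv l 2 u 0 * cnj (nderiv l 1 h 0)
         - nderiv l 3 u l * cnj (h l) + nderiv l 3 u 0 * cnj (h 0)"
proof -
  define A where "A = (LINT x:{0..l}|lebesgue. nderiv l 2 u x * cnj (nderiv l 2 h x))"
  define B where "B = (LINT x:{0..l}|lebesgue. nderiv l 3 u x * cnj (nderiv l 1 h x))"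
  define C where "C = (LINT x:{0..l}|lebesgue. nderiv l 4 u x * cnj (h x))"
  have "A + B = nderiv l 2 u l * cnj (nderiv l 1 h l) - nderiv l 2 u 0 * cnj (nderiv l 1 h 0)"
    unfolding A_def B_def
  proof (rule set_integral_by_parts)
    show "(nderiv l 2 u has_vector_derivative nderiv l 3 u x) (at x within {0..l})" if "x \<in> {0..l}" for x
      using Hk_has_vector_derivative[OF u l _ that, of 2] by (simp add: numeral_eq_Suc)
    show "continuous_on {0..l} (nderiv l 3 u)" by (rule Hk_continuous_nderiv[OF u l]) simp
    show "set_integrable lebesgue {0..l} (\<lambda>x. cnj (nderiv l 2 h x))"
      using Hk_nderiv_L2[OF h l, of 1] by (intro set_integrable_cnj L2_on_set_integrable) (simp add: numeral_eq_Suc)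
    show "cnj (nderiv l 1 h x) = cnj (nderiv l 1 h 0) + (LINT t:{0..x}|lebesgue. cnj (nderiv l 2 h t))"
      if "x \<in> {0..l}" for x
      using Hk_nderiv_integral[OF h l _ that, of 1] by (simp add: set_integral_cnj numeral_eq_Suc)
  qed (use l in simp)
  then have "A = nderiv l 2 u l * cnj (nderiv l 1 h l) - nderiv l 2 u 0 * cnj (nderiv l 1 h 0) - B"
    by (simp add: eq_diff_eq)
  moreover have "(LINT x:{0..l}|lebesgue. cnj (h x) * nderiv l 4 u x)
      + (LINT x:{0..l}|lebesgue. cnj (nderiv l 1 h x) * nderiv l 3 u x)
      = cnj (h l) * nderiv l 3 u l - cnj (h 0) * nderiv l 3 u 0"
  proof (rule set_integral_by_parts)
    show "((\<lambda>x. cnj (h x)) has_vector_derivative cnj (nderiv l 1 h x)) (at x within {0..l})" if "x \<in> {0..l}" for x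
      using has_vector_derivative_cnj[OF Hk_has_vector_derivative[OF h l _ that, of 0]] by (simp add: numeral_eq_Suc)
    show "continuous_on {0..l} (\<lambda>x. cnj (nderiv l 1 h x))"
      by (intro continuous_on_cnj Hk_continuous_nderiv[OF h l]) simp
    show "set_integrable lebesgue {0..l} (nderiv l 4 u)"
      using Hk_nderiv_L2[OF u l, of 3] by (intro L2_on_set_integrable) (simp add: numeral_eq_Suc)
    show "nderiv l 3 u x = nderiv l 3 u 0 + (LINT t:{0..x}|lebesgue. nderiv l 4 u t)" if "x \<in> {0..l}" for x
      using Hk_nderiv_integral[OF u l _ that, of 3] by (simp add: numeral_eq_Suc)
  qed (use l in simp)
  then have "C + B = cnj (h l) * nderiv l 3 u l - cnj (h 0) * nderiv l 3 u 0"
    unfolding B_def C_def by (simp only: mult.commute)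
  then have "B = cnj (h l) * nderiv l 3 u l - cnj (h 0) * nderiv l 3 u 0 - C"
    by (simp add: eq_diff_eq add.commute)
  ultimately show ?thesis
    unfolding A_def[symmetric] C_def[symmetric] by (simp add: algebra_simps)
qed

lemma sum_lessThan_add: "(\<Sum>i<a+b. F i) = (\<Sum>i<a. F i) + (\<Sum>i<b. F (a+i))"
  for F :: "nat \<Rightarrow> 'a::comm_monoid_add"
  by (induction b) (simp_all add: add.assoc)

lemma sum_lessThan_4_blocks:
  "(\<Sum>i<4*E. F i) = (\<Sum>e<E. F e + F (E+e) + F (2*E+e) + F (3*E+e))"
  for F :: "nat \<Rightarrow> 'a::comm_monoid_add"
proof -
  have "4 * E = E + (E + (E + E))" by simp
  moreover have "\<And>e. 2*E+e = E+(E+e)" "\<And>e. 3*E+e = E+(E+(E+e))" by simp_all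
  ultimately show ?thesis by (simp only: sum_lessThan_add sum.distrib add.assoc)
qed

lemma green_formula:
  assumes len: "\<And>e. e < E \<Longrightarrow> 0 < len e" and u: "HkG 4 E len u" and h: "HkG 2 E len h"
  shows "(\<Sum>e<E. LINT x:{0..len e}|lebesgue. nderiv (len e) 2 (u e) x * cnj (nderiv (len e) 2 (h e) x))
        = (\<Sum>e<E. LINT x:{0..len e}|lebesgue. nderiv (len e) 4 (u e) x * cnj (h e x))
          - cinner (4*E) (bv32 E len u) (bv01 E len h)"
proof -
  define K where "K e = nderiv (len e) 2 (u e) 0 * cnj (nderiv (len e) 1 (h e) 0)
      - nderiv (len e) 2 (u e) (len e) * cnj (nderiv (len e) 1 (h e) (len e))
      + nderiv (len e) 3 (u e) (len e) * cnj (h e (len e)) - nderiv (len e) 3 (u e) 0 * cnj (h e 0)" for e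
  have "cinner (4*E) (bv32 E len u) (bv01 E len h) = (\<Sum>e<E. K e)"
    unfolding cinner_def sum_lessThan_4_blocks
    by (rule sum.cong) (auto simp: K_def bv32_def bv01_def algebra_simps)
  moreover have "(LINT x:{0..len e}|lebesgue. nderiv (len e) 2 (u e) x * cnj (nderiv (len e) 2 (h e) x))
      = (LINT x:{0..len e}|lebesgue. nderiv (len e) 4 (u e) x * cnj (h e x)) - K e" if "e < E" for e
    using green_formula_edge[OF len[OF that]] u h that unfolding HkG_def K_def
    by (simp add: algebra_simps)
  ultimately show ?thesis by (simp add: sum_subtractf)
qed

lemma form_a_eq_L2inner:
  assumes len: "\<And>e. e < E \<Longrightarrow> 0 < len e" and u: "HkG 4 E len u" and v: "L2G E len v"
    and uv: "\<And>e. e < E \<Longrightarrow> AE x in lebesgue. x \<in> {0..len e} \<longrightarrow> v e x = nderiv (len e) 4 (u e) x"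
    and h: "HkG 2 E len h"
  shows "form_a E len R u h
       = L2inner E len v h - cinner (4*E) (\<lambda>i. bv32 E len u i + R (bv01 E len u) i) (bv01 E len h)"
proof -
  have "(LINT x:{0..len e}|lebesgue. nderiv (len e) 4 (u e) x * cnj (h e x))
      = (LINT x:{0..len e}|lebesgue. v e x * cnj (h e x))" if e: "e < E" for e
  proof (rule set_integral_cong_AE_subset)
    have l: "0 < len e" by (rule len[OF e])
    have "L2_on {0..len e} (h e)"
      using L2_on_continuous[OF Hk_continuous_nderiv[of 2 "len e" "h e" 0]] h e l by (simp add: HkG_def)
    moreover have "L2_on {0..len e} (nderiv (len e) 4 (u e))"
      using Hk_nderiv_L2[of 4 "len e" "u e" 3] u e l by (simp add: HkG_def numeral_eq_Suc)
    moreover have "L2_on {0..len e} (v e)" using v e by (simp add: L2G_def)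
    ultimately show "set_integrable lebesgue {0..len e} (\<lambda>x. nderiv (len e) 4 (u e) x * cnj (h e x))"
      "set_integrable lebesgue {0..len e} (\<lambda>x. v e x * cnj (h e x))"
      by (simp_all add: L2_on_mult_cnj_integrable)
    show "AE x in lebesgue. x \<in> {0..len e} \<longrightarrow> nderiv (len e) 4 (u e) x * cnj (h e x) = v e x * cnj (h e x)"
      using uv[OF e] by (rule eventually_mono) auto
  qed auto
  then have "(\<Sum>e<E. LINT x:{0..len e}|lebesgue. nderiv (len e) 4 (u e) x * cnj (h e x)) = L2inner E len v h"
    unfolding L2inner_def by (intro sum.cong) auto
  moreover have "form_a E len R u h = (\<Sum>e<E. LINT x:{0..len e}|lebesgue. nderiv (len e) 4 (u e) x * cnj (h e x))
      - cinner (4*E) (bv32 E len u) (bv01 E len h) - cinner (4*E) (R (bv01 E len u)) (bv01 E len h)"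
    by (simp only: form_a_def green_formula[OF len u h])
  ultimately show ?thesis
    by (simp add: cinner_def distrib_right sum.distrib)
qed

section \<open>Functions orthogonal to all second derivatives of test functions\<close>

lemma Hk2_double_integral:
  fixes \<psi> :: "real \<Rightarrow> complex"
  assumes l: "0 < l" and \<psi>: "L2_on {0..l} \<psi>"
  defines "\<Psi> \<equiv> \<lambda>x. LINT t:{0..x}|lebesgue. \<psi> t"
  defines "\<phi> \<equiv> \<lambda>x. LINT s:{0..x}|lebesgue. \<Psi> s"
  shows "Hk 2 l \<phi>" and "\<And>x. x \<in> {0..l} \<Longrightarrow> nderiv l 1 \<phi> x = \<Psi> x"
    and "AE x in lebesgue. x \<in> {0..l} \<longrightarrow> nderiv l 2 \<phi> x = \<psi> x"
proof -
  have 0: "0 \<in> {0..l}" using l by auto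
  have \<psi>i: "set_integrable lebesgue {0..l} \<psi>" by (rule L2_on_set_integrable[OF \<psi>])
  have \<Psi>0: "\<Psi> 0 = 0" and \<phi>0: "\<phi> 0 = 0"
    by (simp_all add: \<Psi>_def \<phi>_def set_integral_singleton)
  have \<Psi>: "\<Psi> x = \<Psi> 0 + (LINT t:{0..x}|lebesgue. \<psi> t)" for x
    unfolding \<Psi>0 by (simp add: \<Psi>_def)
  have \<Psi>c: "continuous_on {0..l} \<Psi>" by (rule continuous_on_indefinite_integral[OF \<psi>i \<Psi>])
  have d\<phi>: "(\<phi> has_vector_derivative \<Psi> x) (at x within {0..l})" if "x \<in> {0..l}" for x
    by (rule indefinite_integral_has_vector_derivative[OF \<Psi>c _ that]) (simp add: \<phi>_def)
  show n1: "nderiv l 1 \<phi> x = \<Psi> x" if "x \<in> {0..l}" for x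
    by (rule nderiv_1_eq[OF l that d\<phi>[OF that]])
  have "Hk (Suc 0) l \<phi>"
    by (rule Hk_SucI[OF Hk_0 L2_on_continuous[OF \<Psi>c]]) (unfold nderiv_0 \<phi>0, simp add: \<phi>_def)
  moreover have "nderiv l (Suc 0) \<phi> x = nderiv l (Suc 0) \<phi> 0 + (LINT t:{0..x}|lebesgue. \<psi> t)"
    if "x \<in> {0..l}" for x
    using n1[OF that] n1[OF 0] \<Psi>[of x] \<Psi>0 by simp
  ultimately have "Hk (Suc (Suc 0)) l \<phi>"
    by (rule Hk_SucI[OF _ \<psi>])
  then show "Hk 2 l \<phi>" by (simp add: numeral_2_eq_2)
  have "AE x in lebesgue. x \<in> {0..l} \<longrightarrow> vector_derivative \<Psi> (at x within {0..l}) = \<psi> x"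
    by (rule vector_derivative_indefinite_integral_ae[OF l \<psi>i \<Psi>])
  then show "AE x in lebesgue. x \<in> {0..l} \<longrightarrow> nderiv l 2 \<phi> x = \<psi> x"
  proof (rule eventually_mono, intro impI)
    fix x assume "x \<in> {0..l} \<longrightarrow> vector_derivative \<Psi> (at x within {0..l}) = \<psi> x" "x \<in> {0..l}"
    then show "nderiv l 2 \<phi> x = \<psi> x"
      unfolding nderiv_numeral(2) using nderiv_Suc_cong[OF n1] by simp
  qed
qed

lemma test_function_from_moments:
  fixes \<psi> :: "real \<Rightarrow> complex"
  assumes l: "0 < l" and \<psi>: "L2_on {0..l} \<psi>"
    and moment0: "(LINT x:{0..l}|lebesgue. \<psi> x) = 0"
    and moment1: "(LINT x:{0..l}|lebesgue. of_real x * \<psi> x) = 0"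
  obtains \<phi> where "Hk 2 l \<phi>" "\<phi> 0 = 0" "\<phi> l = 0" "nderiv l 1 \<phi> 0 = 0" "nderiv l 1 \<phi> l = 0"
    "AE x in lebesgue. x \<in> {0..l} \<longrightarrow> nderiv l 2 \<phi> x = \<psi> x"
proof -
  define \<Psi> where "\<Psi> x = (LINT t:{0..x}|lebesgue. \<psi> t)" for x
  define \<phi> where "\<phi> x = (LINT s:{0..x}|lebesgue. \<Psi> s)" for x
  have \<Psi>0: "\<Psi> 0 = 0" and \<phi>0: "\<phi> 0 = 0" and \<Psi>l: "\<Psi> l = 0"
    using moment0 by (simp_all add: \<Psi>_def \<phi>_def set_integral_singleton)
  have "(LINT x:{0..l}|lebesgue. of_real x * \<psi> x) + (LINT x:{0..l}|lebesgue. 1 * \<Psi> x)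
      = of_real l * \<Psi> l - of_real 0 * \<Psi> 0"
    by (rule set_integral_by_parts[OF _ _ _ L2_on_set_integrable[OF \<psi>]])
      (use l in \<open>auto intro!: derivative_eq_intros simp: \<Psi>_def set_integral_singleton\<close>)
  then have \<phi>l: "\<phi> l = 0" using moment1 \<Psi>l by (simp add: \<phi>_def)
  have "0 \<in> {0..l}" "l \<in> {0..l}" using l by auto
  then show ?thesis
    using that[OF _ \<phi>0 \<phi>l] Hk2_double_integral[OF l \<psi>] \<Psi>0 \<Psi>l
    unfolding \<phi>_def[abs_def] \<Psi>_def[abs_def] by simp
qed

lemma linear_function_moments:
  fixes a b :: complex
  assumes l: "0 \<le> l"
  shows "(LINT x:{0..l}|lebesgue. a + b * of_real x) = a * of_real l + b * (of_real l * of_real l) / 2"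
    and "(LINT x:{0..l}|lebesgue. of_real x * (a + b * of_real x))
      = a * (of_real l * of_real l) / 2 + b * (of_real l * of_real l * of_real l) / 3"
proof -
  have "((\<lambda>x::real. a * of_real x + b * (of_real x * of_real x) / 2) has_vector_derivative (a + b * of_real x))
      (at x within {0..l})" for x
    by (auto intro!: derivative_eq_intros simp: algebra_simps)
  from eq_set_integral_of_continuous_derivative[OF this, of l] l
  show "(LINT x:{0..l}|lebesgue. a + b * of_real x) = a * of_real l + b * (of_real l * of_real l) / 2"
    by (simp add: continuous_intros)
  have "((\<lambda>x::real. a * (of_real x * of_real x) / 2 + b * (of_real x * of_real x * of_real x) / 3)
      has_vector_derivative (of_real x * (a + b * of_real x))) (at x within {0..l})" for x
    by (auto intro!: derivative_eq_intros simp: algebra_simps)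
  from eq_set_integral_of_continuous_derivative[OF this, of l] l
  show "(LINT x:{0..l}|lebesgue. of_real x * (a + b * of_real x))
      = a * (of_real l * of_real l) / 2 + b * (of_real l * of_real l * of_real l) / 3"
    by (simp add: continuous_intros)
qed

lemma orthogonal_to_linear_functions:
  fixes z :: "real \<Rightarrow> complex"
  assumes l: "0 < l" and z: "set_integrable lebesgue {0..l} z"
  obtains \<alpha> \<beta> where "(LINT x:{0..l}|lebesgue. z x - (\<alpha> + \<beta> * of_real x)) = 0"
    "(LINT x:{0..l}|lebesgue. of_real x * (z x - (\<alpha> + \<beta> * of_real x))) = 0"
proof -
  define Z0 where "Z0 = (LINT x:{0..l}|lebesgue. z x)"
  define Z1 where "Z1 = (LINT x:{0..l}|lebesgue. of_real x * z x)"
  define L where "L = (of_real l :: complex)"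
  have L: "L \<noteq> 0" using l by (simp add: L_def)
  \<comment> \<open>Solve the 2x2 Gram system of the functions 1 and x on [0,l].\<close>
  define \<alpha> where "\<alpha> = 4 * Z0 / L - 6 * Z1 / (L * L)"
  define \<beta> where "\<beta> = 12 * Z1 / (L * L * L) - 6 * Z0 / (L * L)"
  have xz: "set_integrable lebesgue {0..l} (\<lambda>x. of_real x * z x)"
    by (rule set_integrable_continuous_mult[OF _ z]) (intro continuous_intros)
  have "(LINT x:{0..l}|lebesgue. z x - (\<alpha> + \<beta> * of_real x)) = Z0 - (\<alpha> * L + \<beta> * (L * L) / 2)"
    unfolding Z0_def L_def using l
    by (subst set_integral_diff(2)[OF z]) (auto simp: linear_function_moments
        intro!: absolutely_integrable_continuous_real continuous_intros)
  also have "\<dots> = 0" using L by (simp add: \<alpha>_def \<beta>_def field_simps; simp add: algebra_simps)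
  finally have 0: "(LINT x:{0..l}|lebesgue. z x - (\<alpha> + \<beta> * of_real x)) = 0" .
  have "(LINT x:{0..l}|lebesgue. of_real x * (z x - (\<alpha> + \<beta> * of_real x)))
      = (LINT x:{0..l}|lebesgue. of_real x * z x - of_real x * (\<alpha> + \<beta> * of_real x))"
    by (simp add: right_diff_distrib)
  also have "\<dots> = Z1 - (\<alpha> * (L * L) / 2 + \<beta> * (L * L * L) / 3)"
    unfolding Z1_def L_def using l
    by (subst set_integral_diff(2)[OF xz]) (auto simp: linear_function_moments
        intro!: absolutely_integrable_continuous_real continuous_intros)
  also have "\<dots> = 0" using L by (simp add: \<alpha>_def \<beta>_def field_simps; simp add: algebra_simps)
  finally show ?thesis using that 0 by blast
qed

lemma L2_on_AE_zero_if_self_inner_zero: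
  assumes \<psi>: "L2_on S \<psi>" and S: "S \<in> sets lebesgue" and zero: "(LINT x:S|lebesgue. \<psi> x * cnj (\<psi> x)) = 0"
  shows "AE x in lebesgue. x \<in> S \<longrightarrow> \<psi> x = 0"
proof -
  have i: "integrable lebesgue (\<lambda>x. indicator S x *\<^sub>R (cmod (\<psi> x))\<^sup>2)"
    using \<psi> by (simp add: L2_on_def set_integrable_def)
  have "(LINT x:S|lebesgue. \<psi> x * cnj (\<psi> x)) = (LINT x:S|lebesgue. complex_of_real ((cmod (\<psi> x))\<^sup>2))"
    by (simp only: complex_norm_square)
  also have "\<dots> = of_real (LINT x:S|lebesgue. (cmod (\<psi> x))\<^sup>2)"
    by (rule set_integral_complex_of_real)
  finally have "(LINT x:S|lebesgue. (cmod (\<psi> x))\<^sup>2) = 0"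
    using zero by simp
  then have "integral\<^sup>L lebesgue (\<lambda>x. indicator S x *\<^sub>R (cmod (\<psi> x))\<^sup>2) = 0"
    by (simp add: set_lebesgue_integral_def)
  then have "AE x in lebesgue. indicator S x *\<^sub>R (cmod (\<psi> x))\<^sup>2 = 0"
    using integral_nonneg_eq_0_iff_AE[OF i] by simp
  then show ?thesis by (rule eventually_mono) (auto simp: indicator_def)
qed

lemma set_integral_linear_mult_cnj:
  fixes \<psi> :: "real \<Rightarrow> complex"
  assumes \<psi>: "set_integrable lebesgue {0..l} \<psi>"
  shows "(LINT x:{0..l}|lebesgue. (\<alpha> + \<beta> * of_real x) * cnj (\<psi> x))
    = \<alpha> * cnj (LINT x:{0..l}|lebesgue. \<psi> x) + \<beta> * cnj (LINT x:{0..l}|lebesgue. of_real x * \<psi> x)"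
proof -
  have \<psi>': "set_integrable lebesgue {0..l} (\<lambda>x. cnj (\<psi> x))" by (rule set_integrable_cnj[OF \<psi>])
  moreover have "set_integrable lebesgue {0..l} (\<lambda>x. of_real x * cnj (\<psi> x))"
    by (rule set_integrable_continuous_mult[OF _ \<psi>']) (intro continuous_intros)
  ultimately show ?thesis
    by (simp add: distrib_right set_integral_add set_integral_cnj[symmetric] mult.assoc)
qed

lemma orthogonal_to_second_derivatives_imp_linear:
  fixes z :: "real \<Rightarrow> complex"
  assumes l: "0 < l" and z: "L2_on {0..l} z"
    and orth: "\<And>\<phi>. Hk 2 l \<phi> \<Longrightarrow> \<phi> 0 = 0 \<Longrightarrow> \<phi> l = 0 \<Longrightarrow> nderiv l 1 \<phi> 0 = 0 \<Longrightarrow> nderiv l 1 \<phi> l = 0 \<Longrightarrow>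
        (LINT x:{0..l}|lebesgue. z x * cnj (nderiv l 2 \<phi> x)) = 0"
  obtains \<alpha> \<beta> where "AE x in lebesgue. x \<in> {0..l} \<longrightarrow> z x = \<alpha> + \<beta> * of_real x"
proof -
  obtain \<alpha> \<beta> where moment0: "(LINT x:{0..l}|lebesgue. z x - (\<alpha> + \<beta> * of_real x)) = 0"
    and moment1: "(LINT x:{0..l}|lebesgue. of_real x * (z x - (\<alpha> + \<beta> * of_real x))) = 0"
    using orthogonal_to_linear_functions[OF l L2_on_set_integrable[OF z]] by blast
  define \<psi> where "\<psi> x = z x - (\<alpha> + \<beta> * of_real x)" for x
  have \<psi>: "L2_on {0..l} \<psi>"
    unfolding \<psi>_def by (intro L2_on_diff[OF z] L2_on_continuous continuous_intros)
  have \<psi>i: "set_integrable lebesgue {0..l} (\<lambda>x. cnj (\<psi> x))"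
    by (rule set_integrable_cnj[OF L2_on_set_integrable[OF \<psi>]])
  obtain \<phi> where \<phi>: "Hk 2 l \<phi>" "\<phi> 0 = 0" "\<phi> l = 0" "nderiv l 1 \<phi> 0 = 0" "nderiv l 1 \<phi> l = 0"
    and \<phi>2: "AE x in lebesgue. x \<in> {0..l} \<longrightarrow> nderiv l 2 \<phi> x = \<psi> x"
    using test_function_from_moments[OF l \<psi>] moment0 moment1 unfolding \<psi>_def by blast
  have "(LINT x:{0..l}|lebesgue. z x * cnj (\<psi> x)) = (LINT x:{0..l}|lebesgue. z x * cnj (nderiv l 2 \<phi> x))"
  proof (rule set_integral_cong_AE_subset)
    show "set_integrable lebesgue {0..l} (\<lambda>x. z x * cnj (\<psi> x))"
      "set_integrable lebesgue {0..l} (\<lambda>x. z x * cnj (nderiv l 2 \<phi> x))"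
      using L2_on_mult_cnj_integrable z \<psi> Hk_nderiv_L2[OF \<phi>(1) l, of 1] by (simp_all add: numeral_eq_Suc)
    show "AE x in lebesgue. x \<in> {0..l} \<longrightarrow> z x * cnj (\<psi> x) = z x * cnj (nderiv l 2 \<phi> x)"
      using \<phi>2 by (rule eventually_mono) simp
  qed auto
  also have "\<dots> = 0" by (rule orth[OF \<phi>])
  finally have z\<psi>: "(LINT x:{0..l}|lebesgue. z x * cnj (\<psi> x)) = 0" .
  have "(LINT x:{0..l}|lebesgue. (\<alpha> + \<beta> * of_real x) * cnj (\<psi> x))
      = \<alpha> * cnj (LINT x:{0..l}|lebesgue. \<psi> x) + \<beta> * cnj (LINT x:{0..l}|lebesgue. of_real x * \<psi> x)"
    by (rule set_integral_linear_mult_cnj[OF L2_on_set_integrable[OF \<psi>]])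
  then have lin\<psi>: "(LINT x:{0..l}|lebesgue. (\<alpha> + \<beta> * of_real x) * cnj (\<psi> x)) = 0"
    using moment0 moment1 by (simp add: \<psi>_def)
  have "(LINT x:{0..l}|lebesgue. \<psi> x * cnj (\<psi> x))
      = (LINT x:{0..l}|lebesgue. z x * cnj (\<psi> x)) - (LINT x:{0..l}|lebesgue. (\<alpha> + \<beta> * of_real x) * cnj (\<psi> x))"
  proof (subst set_integral_diff(2)[symmetric])
    show "set_integrable lebesgue {0..l} (\<lambda>x. z x * cnj (\<psi> x))"
      using L2_on_mult_cnj_integrable[OF z \<psi>] .
    show "set_integrable lebesgue {0..l} (\<lambda>x. (\<alpha> + \<beta> * of_real x) * cnj (\<psi> x))"
      by (rule set_integrable_continuous_mult[OF _ \<psi>i]) (intro continuous_intros)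
  qed (simp add: \<psi>_def left_diff_distrib)
  then have "(LINT x:{0..l}|lebesgue. \<psi> x * cnj (\<psi> x)) = 0" using z\<psi> lin\<psi> by simp
  then have "AE x in lebesgue. x \<in> {0..l} \<longrightarrow> \<psi> x = 0"
    by (rule L2_on_AE_zero_if_self_inner_zero[OF \<psi>, rotated]) simp
  then show ?thesis
    by (intro that[of \<alpha> \<beta>]) (auto simp: \<psi>_def elim!: eventually_mono)
qed

section \<open>Regularity of weak solutions\<close>

lemma integral_against_second_derivative:
  fixes W V v \<phi> :: "real \<Rightarrow> complex"
  assumes l: "0 < l"
    and dW: "\<And>x. x \<in> {0..l} \<Longrightarrow> (W has_vector_derivative V x) (at x within {0..l})"
    and v: "set_integrable lebesgue {0..l} v"
    and V: "\<And>x. x \<in> {0..l} \<Longrightarrow> V x = V 0 + (LINT t:{0..x}|lebesgue. v t)"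
    and \<phi>: "Hk 2 l \<phi>" "\<phi> 0 = 0" "\<phi> l = 0" "nderiv l 1 \<phi> 0 = 0" "nderiv l 1 \<phi> l = 0"
  shows "(LINT x:{0..l}|lebesgue. W x * cnj (nderiv l 2 \<phi> x)) = (LINT x:{0..l}|lebesgue. v x * cnj (\<phi> x))"
proof -
  have Vc: "continuous_on {0..l} V" by (rule continuous_on_indefinite_integral[OF v V])
  have "(LINT x:{0..l}|lebesgue. W x * cnj (nderiv l 2 \<phi> x)) + (LINT x:{0..l}|lebesgue. V x * cnj (nderiv l 1 \<phi> x))
      = W l * cnj (nderiv l 1 \<phi> l) - W 0 * cnj (nderiv l 1 \<phi> 0)"
  proof (rule set_integral_by_parts[OF _ dW Vc])
    show "set_integrable lebesgue {0..l} (\<lambda>x. cnj (nderiv l 2 \<phi> x))"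
      using Hk_nderiv_L2[OF \<phi>(1) l, of 1] by (intro set_integrable_cnj L2_on_set_integrable) (simp add: numeral_eq_Suc)
    show "cnj (nderiv l 1 \<phi> x) = cnj (nderiv l 1 \<phi> 0) + (LINT t:{0..x}|lebesgue. cnj (nderiv l 2 \<phi> t))"
      if "x \<in> {0..l}" for x
      using Hk_nderiv_integral[OF \<phi>(1) l _ that, of 1] by (simp add: set_integral_cnj numeral_eq_Suc)
  qed (use l in auto)
  moreover have "(LINT x:{0..l}|lebesgue. cnj (\<phi> x) * v x) + (LINT x:{0..l}|lebesgue. cnj (nderiv l 1 \<phi> x) * V x)
      = cnj (\<phi> l) * V l - cnj (\<phi> 0) * V 0"
  proof (rule set_integral_by_parts[OF _ _ _ v V])
    show "((\<lambda>x. cnj (\<phi> x)) has_vector_derivative cnj (nderiv l 1 \<phi> x)) (at x within {0..l})" if "x \<in> {0..l}" for x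
      using has_vector_derivative_cnj[OF Hk_has_vector_derivative[OF \<phi>(1) l _ that, of 0]] by simp
    show "continuous_on {0..l} (\<lambda>x. cnj (nderiv l 1 \<phi> x))"
      by (intro continuous_on_cnj Hk_continuous_nderiv[OF \<phi>(1) l]) simp
  qed (use l in auto)
  ultimately show ?thesis
    using \<phi>(2-5) by (simp add: mult.commute add_eq_0_iff)
qed

lemma weak_second_derivative_eq_double_integral:
  fixes w v :: "real \<Rightarrow> complex"
  assumes l: "0 < l" and w: "L2_on {0..l} w" and v: "set_integrable lebesgue {0..l} v"
    and weak: "\<And>\<phi>. Hk 2 l \<phi> \<Longrightarrow> \<phi> 0 = 0 \<Longrightarrow> \<phi> l = 0 \<Longrightarrow> nderiv l 1 \<phi> 0 = 0 \<Longrightarrow> nderiv l 1 \<phi> l = 0 \<Longrightarrow>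
        (LINT x:{0..l}|lebesgue. w x * cnj (nderiv l 2 \<phi> x)) = (LINT x:{0..l}|lebesgue. v x * cnj (\<phi> x))"
  obtains \<alpha> \<beta> where "AE x in lebesgue. x \<in> {0..l} \<longrightarrow>
    w x = (LINT s:{0..x}|lebesgue. (LINT t:{0..s}|lebesgue. v t)) + \<alpha> + \<beta> * of_real x"
proof -
  define V where "V x = (LINT t:{0..x}|lebesgue. v t)" for x
  define W where "W x = (LINT s:{0..x}|lebesgue. V s)" for x
  have V: "V x = V 0 + (LINT t:{0..x}|lebesgue. v t)" for x
    by (simp add: V_def set_integral_singleton)
  have Vc: "continuous_on {0..l} V" by (rule continuous_on_indefinite_integral[OF v V])
  have dW: "(W has_vector_derivative V x) (at x within {0..l})" if "x \<in> {0..l}" for x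
    by (rule indefinite_integral_has_vector_derivative[OF Vc _ that]) (simp add: W_def)
  have Wc: "continuous_on {0..l} W" by (rule continuous_on_vector_derivative) (rule dW)
  define z where "z x = w x - W x" for x
  have z: "L2_on {0..l} z" unfolding z_def by (rule L2_on_diff[OF w L2_on_continuous[OF Wc]])
  have "(LINT x:{0..l}|lebesgue. z x * cnj (nderiv l 2 \<phi> x)) = 0"
    if \<phi>: "Hk 2 l \<phi>" "\<phi> 0 = 0" "\<phi> l = 0" "nderiv l 1 \<phi> 0 = 0" "nderiv l 1 \<phi> l = 0" for \<phi>
  proof -
    have L2\<phi>: "L2_on {0..l} (nderiv l 2 \<phi>)"
      using Hk_nderiv_L2[OF \<phi>(1) l, of 1] by (simp add: numeral_eq_Suc)
    have "(LINT x:{0..l}|lebesgue. z x * cnj (nderiv l 2 \<phi> x))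
        = (LINT x:{0..l}|lebesgue. w x * cnj (nderiv l 2 \<phi> x)) - (LINT x:{0..l}|lebesgue. W x * cnj (nderiv l 2 \<phi> x))"
      unfolding z_def left_diff_distrib
      by (intro set_integral_diff(2) L2_on_mult_cnj_integrable[OF w L2\<phi>]
          L2_on_mult_cnj_integrable[OF L2_on_continuous[OF Wc] L2\<phi>])
    also have "\<dots> = 0"
      using weak[OF \<phi>] integral_against_second_derivative[OF l dW v V \<phi>] by simp
    finally show ?thesis .
  qed
  then obtain \<alpha> \<beta> where "AE x in lebesgue. x \<in> {0..l} \<longrightarrow> z x = \<alpha> + \<beta> * of_real x"
    using orthogonal_to_second_derivatives_imp_linear[OF l z] by blast
  then show ?thesis
    by (intro that[of \<alpha> \<beta>]) (auto simp: z_def W_def V_def algebra_simps elim!: eventually_mono)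
qed

lemma Hk_nderiv_eq_continuous:
  assumes u: "Hk k l u" and l: "0 < l" and j: "j < k" and C: "continuous_on {0..l} C"
    and ae: "AE x in lebesgue. x \<in> {0..l} \<longrightarrow> nderiv l (Suc j) u x = C x"
    and x: "x \<in> {0..l}"
  shows "nderiv l (Suc j) u x = C x"
proof (rule nderiv_Suc_eqI[OF l _ x])
  have "nderiv l j u y = nderiv l j u 0 + (LINT t:{0..y}|lebesgue. C t)" if y: "y \<in> {0..l}" for y
  proof -
    have "(LINT t:{0..y}|lebesgue. nderiv l (Suc j) u t) = (LINT t:{0..y}|lebesgue. C t)"
      by (rule set_integral_cong_AE_subset[OF L2_on_set_integrable[OF Hk_nderiv_L2[OF u l j]]
            absolutely_integrable_continuous_real[OF C] _ _ ae]) (use y in auto)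
    then show ?thesis using Hk_nderiv_integral[OF u l j y] by simp
  qed
  then show "(nderiv l j u has_vector_derivative C x) (at x within {0..l})"
    by (rule indefinite_integral_has_vector_derivative[OF C _ x])
qed simp

lemma Hk4_if_nderiv2_continuously_differentiable:
  assumes l: "0 < l" and u: "Hk 2 l u"
    and u2: "\<And>x. x \<in> {0..l} \<Longrightarrow> nderiv l 2 u x = C x"
    and dC: "\<And>x. x \<in> {0..l} \<Longrightarrow> (C has_vector_derivative C' x) (at x within {0..l})"
    and v: "L2_on {0..l} v" and C': "\<And>x. x \<in> {0..l} \<Longrightarrow> C' x = C' 0 + (LINT t:{0..x}|lebesgue. v t)"
  shows "Hk 4 l u" "AE x in lebesgue. x \<in> {0..l} \<longrightarrow> nderiv l 4 u x = v x"
proof -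
  have 0: "0 \<in> {0..l}" using l by simp
  have vi: "set_integrable lebesgue {0..l} v" by (rule L2_on_set_integrable[OF v])
  have C'c: "continuous_on {0..l} C'" by (rule continuous_on_indefinite_integral[OF vi C'])
  have u3: "nderiv l 3 u x = C' x" if "x \<in> {0..l}" for x
    unfolding nderiv_numeral(3) by (rule nderiv_Suc_eqI[OF l _ that dC[OF that]]) (use u2 in simp)
  have "AE x in lebesgue. x \<in> {0..l} \<longrightarrow> vector_derivative C' (at x within {0..l}) = v x"
    by (rule vector_derivative_indefinite_integral_ae[OF l vi]) (rule C')
  then show "AE x in lebesgue. x \<in> {0..l} \<longrightarrow> nderiv l 4 u x = v x"
  proof (rule eventually_mono, intro impI)
    fix x assume "x \<in> {0..l} \<longrightarrow> vector_derivative C' (at x within {0..l}) = v x" "x \<in> {0..l}"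
    then show "nderiv l 4 u x = v x"
      unfolding nderiv_numeral(4) using nderiv_Suc_cong[OF u3] by simp
  qed
  have "nderiv l 2 u x = nderiv l 2 u 0 + (LINT t:{0..x}|lebesgue. C' t)" if "x \<in> {0..l}" for x
    using eq_set_integral_of_continuous_derivative[OF dC C'c that] u2[OF that] u2[OF 0] by simp
  from Hk_SucI[OF u L2_on_continuous[OF C'c] this] have u3H: "Hk 3 l u" by simp
  have "nderiv l 3 u x = nderiv l 3 u 0 + (LINT t:{0..x}|lebesgue. v t)" if "x \<in> {0..l}" for x
    using C'[OF that] u3[OF that] u3[OF 0] by simp
  from Hk_SucI[OF u3H v this] show "Hk 4 l u" by simp
qed

lemma Hk4_if_weak_fourth_derivative:
  fixes u v :: "real \<Rightarrow> complex"
  assumes l: "0 < l" and u: "Hk 2 l u" and v: "L2_on {0..l} v"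
    and weak: "\<And>\<phi>. Hk 2 l \<phi> \<Longrightarrow> \<phi> 0 = 0 \<Longrightarrow> \<phi> l = 0 \<Longrightarrow> nderiv l 1 \<phi> 0 = 0 \<Longrightarrow> nderiv l 1 \<phi> l = 0 \<Longrightarrow>
        (LINT x:{0..l}|lebesgue. nderiv l 2 u x * cnj (nderiv l 2 \<phi> x)) = (LINT x:{0..l}|lebesgue. v x * cnj (\<phi> x))"
  shows "Hk 4 l u" "AE x in lebesgue. x \<in> {0..l} \<longrightarrow> v x = nderiv l 4 u x"
proof -
  have vi: "set_integrable lebesgue {0..l} v" by (rule L2_on_set_integrable[OF v])
  have u2L: "L2_on {0..l} (nderiv l 2 u)"
    using Hk_nderiv_L2[OF u l, of 1] by (simp add: numeral_eq_Suc)
  obtain \<alpha> \<beta> where ae: "AE x in lebesgue. x \<in> {0..l} \<longrightarrow>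
      nderiv l 2 u x = (LINT s:{0..x}|lebesgue. (LINT t:{0..s}|lebesgue. v t)) + \<alpha> + \<beta> * of_real x"
    using weak_second_derivative_eq_double_integral[OF l u2L vi weak] by blast
  define V where "V x = (LINT t:{0..x}|lebesgue. v t)" for x
  define C where "C x = (LINT s:{0..x}|lebesgue. V s) + \<alpha> + \<beta> * of_real x" for x
  have V: "V x = V 0 + (LINT t:{0..x}|lebesgue. v t)" for x
    by (simp add: V_def set_integral_singleton)
  have Vc: "continuous_on {0..l} V" by (rule continuous_on_indefinite_integral[OF vi V])
  have dC: "(C has_vector_derivative V x + \<beta>) (at x within {0..l})" if "x \<in> {0..l}" for x
  proof -
    have "((\<lambda>x. LINT s:{0..x}|lebesgue. V s) has_vector_derivative V x) (at x within {0..l})"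
      by (rule indefinite_integral_has_vector_derivative[OF Vc _ that, of _ 0]) simp
    moreover have "((\<lambda>x::real. of_real x :: complex) has_vector_derivative 1) (at x within {0..l})"
      by (auto intro!: derivative_eq_intros)
    ultimately have "(C has_vector_derivative V x + 0 + \<beta> * 1) (at x within {0..l})"
      unfolding C_def by (intro has_vector_derivative_add has_vector_derivative_const has_vector_derivative_mult_right)
    then show ?thesis by simp
  qed
  have Cc: "continuous_on {0..l} C" by (rule continuous_on_vector_derivative) (rule dC)
  have u2: "nderiv l 2 u x = C x" if "x \<in> {0..l}" for x
    unfolding nderiv_numeral(2)
    by (rule Hk_nderiv_eq_continuous[OF u l _ Cc _ that]) (use ae in \<open>simp_all add: C_def V_def numeral_eq_Suc\<close>)
  have "V x + \<beta> = (V 0 + \<beta>) + (LINT t:{0..x}|lebesgue. v t)" for x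
    using V[of x] by simp
  from Hk4_if_nderiv2_continuously_differentiable[OF l u u2 dC v this]
  show "Hk 4 l u" "AE x in lebesgue. x \<in> {0..l} \<longrightarrow> v x = nderiv l 4 u x"
    by (auto elim: eventually_mono)
qed

section \<open>Cubic Hermite interpolation\<close>

definition hermite_cubic :: "real \<Rightarrow> complex \<Rightarrow> complex \<Rightarrow> complex \<Rightarrow> complex \<Rightarrow> real \<Rightarrow> complex" where
  "hermite_cubic l a0 a1 b0 b1 x = a0 + b0 * of_real x
     + (3 * (a1 - a0) - (2 * b0 + b1) * of_real l) / of_real l ^ 2 * of_real x ^ 2
     + (2 * (a0 - a1) + (b0 + b1) * of_real l) / of_real l ^ 3 * of_real x ^ 3"

lemma
  assumes l: "0 < l"
  shows Hk2_hermite_cubic: "Hk 2 l (hermite_cubic l a0 a1 b0 b1)"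
    and hermite_cubic_0: "hermite_cubic l a0 a1 b0 b1 0 = a0"
    and hermite_cubic_l: "hermite_cubic l a0 a1 b0 b1 l = a1"
    and nderiv_hermite_cubic_0: "nderiv l 1 (hermite_cubic l a0 a1 b0 b1) 0 = b0"
    and nderiv_hermite_cubic_l: "nderiv l 1 (hermite_cubic l a0 a1 b0 b1) l = b1"
proof -
  define c2 where "c2 = (3 * (a1 - a0) - (2 * b0 + b1) * of_real l) / of_real l ^ 2"
  define c3 where "c3 = (2 * (a0 - a1) + (b0 + b1) * of_real l) / of_real l ^ 3"
  define H1 where "H1 x = b0 + 2 * c2 * of_real x + 3 * c3 * (of_real x * of_real x)" for x :: real
  define H2 where "H2 x = 2 * c2 + 6 * c3 * of_real x" for x :: real
  have H: "hermite_cubic l a0 a1 b0 b1 x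
      = a0 + b0 * of_real x + c2 * (of_real x * of_real x) + c3 * (of_real x * of_real x * of_real x)" for x
    by (simp add: hermite_cubic_def c2_def c3_def power2_eq_square power3_eq_cube)
  have d0: "(hermite_cubic l a0 a1 b0 b1 has_vector_derivative H1 x) (at x within {0..l})" for x
    unfolding H[abs_def] H1_def by (auto intro!: derivative_eq_intros simp: algebra_simps)
  have d1: "(H1 has_vector_derivative H2 x) (at x within {0..l})" for x
    unfolding H1_def H2_def by (auto intro!: derivative_eq_intros simp: algebra_simps)
  show "Hk 2 l (hermite_cubic l a0 a1 b0 b1)"
    by (rule Hk2_if_C2[OF l d0 d1]) (auto simp: H2_def intro!: continuous_intros)
  have L: "(of_real l :: complex) \<noteq> 0" using l by simp
  show "hermite_cubic l a0 a1 b0 b1 0 = a0" by (simp add: H)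
  show "hermite_cubic l a0 a1 b0 b1 l = a1"
    using L by (simp add: H c2_def c3_def power2_eq_square power3_eq_cube) (simp add: algebra_simps)
  show "nderiv l 1 (hermite_cubic l a0 a1 b0 b1) 0 = b0"
    using nderiv_1_eq[OF l _ d0, of 0] l by (simp add: H1_def)
  have "H1 l = b1"
    using L by (simp add: H1_def c2_def c3_def power2_eq_square power3_eq_cube field_simps)
  then show "nderiv l 1 (hermite_cubic l a0 a1 b0 b1) l = b1"
    using nderiv_1_eq[OF l _ d0, of l] l by simp
qed

section \<open>The operator associated with the form\<close>

lemma nderiv_zero: "0 < l \<Longrightarrow> x \<in> {0..l} \<Longrightarrow> nderiv l j (\<lambda>_. 0) x = 0"
proof (induction j arbitrary: x)
  case (Suc j)
  show ?case
    by (rule nderiv_Suc_eqI[OF Suc.prems(1) Suc.IH[OF Suc.prems(1)] Suc.prems(2) has_vector_derivative_const])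
qed simp

lemma Hk2_zero: "0 < l \<Longrightarrow> Hk 2 l (\<lambda>_. 0)"
  by (rule Hk2_if_C2[of l _ "\<lambda>_. 0" "\<lambda>_. 0"]) auto

lemma bv01_eq_zero:
  assumes "\<And>e. e < E \<Longrightarrow> h e 0 = 0 \<and> h e (len e) = 0 \<and> nderiv (len e) 1 (h e) 0 = 0 \<and> nderiv (len e) 1 (h e) (len e) = 0"
  shows "bv01 E len h = (\<lambda>i. 0)"
proof
  fix i
  consider "i < E" | "E \<le> i" "i < 2*E" | "2*E \<le> i" "i < 3*E" | "3*E \<le> i" "i < 4*E" | "4*E \<le> i"
    by linarith
  then show "bv01 E len h i = 0"
    by cases (use assms[of i] assms[of "i - E"] assms[of "i - 2*E"] assms[of "i - 3*E"] in \<open>auto simp: bv01_def\<close>)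
qed

lemma bv01_hermite_cubic:
  assumes len: "\<And>e. e < E \<Longrightarrow> 0 < len e" and y: "y \<in> cvecs (4*E)"
  shows "bv01 E len (\<lambda>e. hermite_cubic (len e) (y e) (y (E+e)) (- y (2*E+e)) (y (3*E+e))) = y"
proof
  fix i
  consider "i < E" | "E \<le> i" "i < 2*E" | "2*E \<le> i" "i < 3*E" | "3*E \<le> i" "i < 4*E" | "4*E \<le> i"
    by linarith
  then show "bv01 E len (\<lambda>e. hermite_cubic (len e) (y e) (y (E+e)) (- y (2*E+e)) (y (3*E+e))) i = y i"
    by cases (use len[of i] len[of "i - E"] len[of "i - 2*E"] len[of "i - 3*E"] y in
        \<open>auto simp: bv01_def cvecs_def hermite_cubic_0 hermite_cubic_l nderiv_hermite_cubic_0 nderiv_hermite_cubic_l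
          simp del: One_nat_def\<close>)
qed

lemma assoc_op_weak_equation_on_edge:
  assumes len: "\<And>e. e < E \<Longrightarrow> 0 < len e" and Y: "csubspace (4*E) Y"
    and op: "assoc_op E len (form_dom E len Y) (form_a E len R) u v" and e: "e < E"
    and \<phi>: "Hk 2 (len e) \<phi>" "\<phi> 0 = 0" "\<phi> (len e) = 0" "nderiv (len e) 1 \<phi> 0 = 0" "nderiv (len e) 1 \<phi> (len e) = 0"
  shows "(LINT x:{0..len e}|lebesgue. nderiv (len e) 2 (u e) x * cnj (nderiv (len e) 2 \<phi> x))
       = (LINT x:{0..len e}|lebesgue. v e x * cnj (\<phi> x))"
proof -
  define h where "h e' = (if e' = e then \<phi> else (\<lambda>_. 0))" for e'
  have zero: "x \<in> {0..len e'} \<Longrightarrow> nderiv (len e') j (h e') x = 0" if "e' < E" "e' \<noteq> e" for e' j x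
    using nderiv_zero[OF len[OF that(1)]] that(2) by (simp add: h_def)
  have "bv01 E len h = (\<lambda>i. 0)"
  proof (rule bv01_eq_zero)
    fix e' assume e': "e' < E"
    have "0 \<in> {0..len e'}" "len e' \<in> {0..len e'}" using len[OF e'] by auto
    then show "h e' 0 = 0 \<and> h e' (len e') = 0 \<and> nderiv (len e') 1 (h e') 0 = 0 \<and> nderiv (len e') 1 (h e') (len e') = 0"
      using \<phi> zero[OF e'] by (cases "e' = e") (auto simp: h_def)
  qed
  then have "h \<in> form_dom E len Y"
    using \<phi>(1) Hk2_zero len Y by (auto simp: form_dom_def HkG_def csubspace_def h_def)
  then have "form_a E len R u h = L2inner E len v h"
    using op by (simp add: assoc_op_def)
  moreover have "form_a E len R u h
      = (LINT x:{0..len e}|lebesgue. nderiv (len e) 2 (u e) x * cnj (nderiv (len e) 2 \<phi> x))"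
  proof -
    have "(LINT x:{0..len e'}|lebesgue. nderiv (len e') 2 (u e') x * cnj (nderiv (len e') 2 (h e') x))
        = (if e' = e then (LINT x:{0..len e}|lebesgue. nderiv (len e) 2 (u e) x * cnj (nderiv (len e) 2 \<phi> x)) else 0)"
      if "e' < E" for e'
      using zero[OF that] by (auto simp: h_def intro: set_lebesgue_integral_cong[THEN trans])
    then show ?thesis
      using \<open>bv01 E len h = (\<lambda>i. 0)\<close> e by (simp add: form_a_def cinner_def)
  qed
  moreover have "L2inner E len v h = (LINT x:{0..len e}|lebesgue. v e x * cnj (\<phi> x))"
  proof -
    have "(LINT x:{0..len e'}|lebesgue. v e' x * cnj (h e' x))
        = (if e' = e then (LINT x:{0..len e}|lebesgue. v e x * cnj (\<phi> x)) else 0)" for e'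
      by (simp add: h_def)
    then show ?thesis using e by (simp add: L2inner_def)
  qed
  ultimately show ?thesis by simp
qed

lemma assoc_op_imp_A_op:
  assumes len: "\<And>e. e < E \<Longrightarrow> 0 < len e" and Y: "csubspace (4*E) Y" and R: "clinear_on Y R"
    and op: "assoc_op E len (form_dom E len Y) (form_a E len R) u v"
  shows "A_op E len Y R u v"
proof -
  have u: "HkG 2 E len u" and uY: "bv01 E len u \<in> Y" and v: "L2G E len v"
    and eq: "\<And>h. h \<in> form_dom E len Y \<Longrightarrow> form_a E len R u h = L2inner E len v h"
    using op by (auto simp: assoc_op_def form_dom_def)
  have reg: "Hk 4 (len e) (u e) \<and> (AE x in lebesgue. x \<in> {0..len e} \<longrightarrow> v e x = nderiv (len e) 4 (u e) x)"
    if e: "e < E" for e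
  proof -
    have "Hk 2 (len e) (u e)" "L2_on {0..len e} (v e)" using u v e by (simp_all add: HkG_def L2G_def)
    from Hk4_if_weak_fourth_derivative[OF len[OF e] this assoc_op_weak_equation_on_edge[OF len Y op e]]
    show ?thesis by blast
  qed
  then have u4: "HkG 4 E len u"
    and uv: "\<And>e. e < E \<Longrightarrow> AE x in lebesgue. x \<in> {0..len e} \<longrightarrow> v e x = nderiv (len e) 4 (u e) x"
    by (simp_all add: HkG_def)
  have "cinner (4*E) (\<lambda>i. bv32 E len u i + R (bv01 E len u) i) y = 0" if y: "y \<in> Y" for y
  proof -
    have "y \<in> cvecs (4*E)" using y Y by (auto simp: csubspace_def)
    define h where "h e = hermite_cubic (len e) (y e) (y (E+e)) (- y (2*E+e)) (y (3*E+e))" for e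
    have hy: "bv01 E len h = y"
      unfolding h_def by (rule bv01_hermite_cubic[OF len \<open>y \<in> cvecs (4*E)\<close>])
    have h: "HkG 2 E len h" using Hk2_hermite_cubic len by (simp add: HkG_def h_def)
    have "h \<in> form_dom E len Y" using h hy y by (simp add: form_dom_def)
    with form_a_eq_L2inner[OF len u4 v uv h, of R] show ?thesis
      using eq hy by simp
  qed
  moreover have "(\<lambda>i. bv32 E len u i + R (bv01 E len u) i) \<in> cvecs (4*E)"
    using R uY Y by (auto simp: clinear_on_def csubspace_def cvecs_def bv32_def)
  ultimately show ?thesis
    using u4 uY v uv by (simp add: A_op_def A_dom_def cperp_def)
qed

lemma A_op_imp_assoc_op:
  assumes len: "\<And>e. e < E \<Longrightarrow> 0 < len e" and A: "A_op E len Y R u v"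
  shows "assoc_op E len (form_dom E len Y) (form_a E len R) u v"
proof -
  have u: "HkG 4 E len u" and uY: "bv01 E len u \<in> Y" and v: "L2G E len v"
    and perp: "(\<lambda>i. bv32 E len u i + R (bv01 E len u) i) \<in> cperp (4*E) Y"
    and uv: "\<And>e. e < E \<Longrightarrow> AE x in lebesgue. x \<in> {0..len e} \<longrightarrow> v e x = nderiv (len e) 4 (u e) x"
    using A by (auto simp: A_op_def A_dom_def)
  have "u \<in> form_dom E len Y" using u uY by (auto simp: form_dom_def HkG_def intro: Hk_mono)
  moreover have "form_a E len R u h = L2inner E len v h" if "h \<in> form_dom E len Y" for h
    using form_a_eq_L2inner[OF len u v uv, of h R] perp that by (simp add: form_dom_def cperp_def)
  ultimately show ?thesis using v by (simp add: assoc_op_def)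
qed

theorem theorem4p3:
  fixes V :: "'v set" and src tgt :: "nat \<Rightarrow> 'v" and E :: nat and len :: "nat \<Rightarrow> real"
    and Y :: "(nat \<Rightarrow> complex) set" and R :: "(nat \<Rightarrow> complex) \<Rightarrow> (nat \<Rightarrow> complex)"
  assumes "network V src tgt E len"
    and "csubspace (4*E) Y"
    and "clinear_on Y R"
  shows "\<forall>u v. assoc_op E len (form_dom E len Y) (form_a E len R) u v \<longleftrightarrow> A_op E len Y R u v"
proof -
  have len: "\<And>e. e < E \<Longrightarrow> 0 < len e" using assms(1) by (simp add: network_def)
  show ?thesis
    using assoc_op_imp_A_op[of E len, OF len assms(2,3)] A_op_imp_assoc_op[of E len, OF len] by blast
qed

end
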